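(* Let $G_1,G_2$ be cubic graphs with $K'(G_1,3)=a$ and $K'(G_2,3)=b$. Then for any composition $G_1\,Y\,G_2$ and any composition $G_1\,H\,G_2$ (with any choices of distinguished vertices/edges and identifications), $K'(G_1\,Y\,G_2,3)=K'(G_1\,H\,G_2,3)=ab$.
   Context: Graphs are finite; multiple edges allowed, loops not. Compositions of cubic graphs $G_1,G_2$: (Y) choose a vertex $v_1\in G_1$ with incident edges $v_1s_{11},v_1s_{12},v_1s_{13}$ and a vertex $v_2\in G_2$ with incident edges $v_2s_{21},v_2s_{22},v_2s_{23}$ (in a chosen order); $G_1\,Y\,G_2$ is obtained from the disjoint union by deleting $v_1,v_2$ and adding the edges $s_{1j}s_{2j}$, $j=1,2,3$. (H) choose an edge $s_{11}s_{12}$ of $G_1$ and an edge $s_{21}s_{22}$ of $G_2$; $G_1\,H\,G_2$ is obtained from the disjoint union by deleting these two edges and adding the edges $s_{11}s_{21}$ and $s_{12}s_{22}$. A proper $3$-edge coloring assigns colors from $\{1,2,3\}$ to edges so that adjacent edges get different colors. An edge-Kempe chain (for colors $a\ne b$) is a connected component of the subgraph of edges colored $a$ or $b$; an edge-Kempe switch swaps $a,b$ on one chain. Colorings are edge-Kempe equivalent if related by a finite sequence of switches; $K'(G,3)$ is the number of equivalence classes of proper $3$-edge colorings of $G$. *)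

theory Defs
  imports Main "HOL-Library.FuncSet"
begin

text \<open>Finite multigraphs without loops: a vertex set, an edge set, and an
incidence map assigning to each edge its set of two distinct endpoints
(parallel edges are distinct edges with the same endpoints).\<close>

record ('v, 'e) mgraph =
  verts :: "'v set"
  edges :: "'e set"
  ends  :: "'e \<Rightarrow> 'v set"

definition wf_mgraph :: "('v, 'e) mgraph \<Rightarrow> bool" where
  "wf_mgraph G \<longleftrightarrow> finite (verts G) \<and> finite (edges G) \<and>
     (\<forall>e \<in> edges G. ends G e \<subseteq> verts G \<and> card (ends G e) = 2)"

definition inc :: "('v, 'e) mgraph \<Rightarrow> 'v \<Rightarrow> 'e set" where
  "inc G v = {e \<in> edges G. v \<in> ends G e}"

definition cubic :: "('v, 'e) mgraph \<Rightarrow> bool" where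
  "cubic G \<longleftrightarrow> wf_mgraph G \<and> (\<forall>v \<in> verts G. card (inc G v) = 3)"

definition other_end :: "('v, 'e) mgraph \<Rightarrow> 'e \<Rightarrow> 'v \<Rightarrow> 'v" where
  "other_end G e v = the_elem (ends G e - {v})"

definition proper_3ec :: "('v, 'e) mgraph \<Rightarrow> ('e \<Rightarrow> nat) set" where
  "proper_3ec G = {c \<in> edges G \<rightarrow>\<^sub>E {1, 2, 3}.
     \<forall>e \<in> edges G. \<forall>e' \<in> edges G. e \<noteq> e' \<and> ends G e \<inter> ends G e' \<noteq> {} \<longrightarrow> c e \<noteq> c e'}"

definition ab_adj :: "('v, 'e) mgraph \<Rightarrow> ('e \<Rightarrow> nat) \<Rightarrow> nat \<Rightarrow> nat \<Rightarrow> 'e \<Rightarrow> 'e \<Rightarrow> bool" where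
  "ab_adj G c a b e e' \<longleftrightarrow> e \<in> edges G \<and> e' \<in> edges G \<and> c e \<in> {a, b} \<and> c e' \<in> {a, b}
     \<and> ends G e \<inter> ends G e' \<noteq> {}"

definition kempe_chain :: "('v, 'e) mgraph \<Rightarrow> ('e \<Rightarrow> nat) \<Rightarrow> nat \<Rightarrow> nat \<Rightarrow> 'e set \<Rightarrow> bool" where
  "kempe_chain G c a b K \<longleftrightarrow>
     (\<exists>e0 \<in> edges G. c e0 \<in> {a, b} \<and> K = {e. (ab_adj G c a b)\<^sup>*\<^sup>* e0 e})"

definition kempe_switch :: "('e \<Rightarrow> nat) \<Rightarrow> nat \<Rightarrow> nat \<Rightarrow> 'e set \<Rightarrow> 'e \<Rightarrow> nat" where
  "kempe_switch c a b K = (\<lambda>e. if e \<in> K then (if c e = a then b else if c e = b then a else c e) else c e)"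

definition kempe_step :: "('v, 'e) mgraph \<Rightarrow> ('e \<Rightarrow> nat) \<Rightarrow> ('e \<Rightarrow> nat) \<Rightarrow> bool" where
  "kempe_step G c c' \<longleftrightarrow> c \<in> proper_3ec G \<and>
     (\<exists>a b K. a \<in> {1, 2, 3} \<and> b \<in> {1, 2, 3} \<and> a \<noteq> b \<and> kempe_chain G c a b K \<and>
        c' = kempe_switch c a b K)"

definition kempe_equiv :: "('v, 'e) mgraph \<Rightarrow> (('e \<Rightarrow> nat) \<times> ('e \<Rightarrow> nat)) set" where
  "kempe_equiv G = {(c, c'). c \<in> proper_3ec G \<and> (kempe_step G)\<^sup>*\<^sup>* c c'}"

text \<open>K'(G,3): number of edge-Kempe equivalence classes of proper 3-edge colourings.\<close>
definition K3 :: "('v, 'e) mgraph \<Rightarrow> nat" where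
  "K3 G = card (proper_3ec G // kempe_equiv G)"

text \<open>Y-composition: delete v1, v2; the bijection f between the edges at v1 and the
edges at v2 fixes the order; each pair (e, f e) becomes an edge joining the other
endpoint of e with the other endpoint of f e.\<close>
definition Y_comp :: "('v1, 'e1) mgraph \<Rightarrow> ('v2, 'e2) mgraph \<Rightarrow> 'v1 \<Rightarrow> 'v2 \<Rightarrow> ('e1 \<Rightarrow> 'e2)
    \<Rightarrow> ('v1 + 'v2, ('e1 + 'e2) + ('e1 \<times> 'e2)) mgraph" where
  "Y_comp G1 G2 v1 v2 f =
    \<lparr> verts = Inl ` (verts G1 - {v1}) \<union> Inr ` (verts G2 - {v2}),
      edges = Inl ` Inl ` (edges G1 - inc G1 v1) \<union> Inl ` Inr ` (edges G2 - inc G2 v2)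
              \<union> Inr ` {(e, f e) | e. e \<in> inc G1 v1},
      ends = (\<lambda>x. case x of
                Inl (Inl e) \<Rightarrow> Inl ` ends G1 e
              | Inl (Inr e) \<Rightarrow> Inr ` ends G2 e
              | Inr (e1, e2) \<Rightarrow> {Inl (other_end G1 e1 v1), Inr (other_end G2 e2 v2)}) \<rparr>"

text \<open>H-composition: delete edges d1, d2; the bijection g between the ends of d1 and
the ends of d2 fixes the identification; add edges x -- g x.\<close>
definition H_comp :: "('v1, 'e1) mgraph \<Rightarrow> ('v2, 'e2) mgraph \<Rightarrow> 'e1 \<Rightarrow> 'e2 \<Rightarrow> ('v1 \<Rightarrow> 'v2)
    \<Rightarrow> ('v1 + 'v2, ('e1 + 'e2) + ('v1 \<times> 'v2)) mgraph" where
  "H_comp G1 G2 d1 d2 g =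
    \<lparr> verts = Inl ` verts G1 \<union> Inr ` verts G2,
      edges = Inl ` Inl ` (edges G1 - {d1}) \<union> Inl ` Inr ` (edges G2 - {d2})
              \<union> Inr ` {(x, g x) | x. x \<in> ends G1 d1},
      ends = (\<lambda>x. case x of
                Inl (Inl e) \<Rightarrow> Inl ` ends G1 e
              | Inl (Inr e) \<Rightarrow> Inr ` ends G2 e
              | Inr (x1, x2) \<Rightarrow> {Inl x1, Inr x2}) \<rparr>"

end

theory Submission
  imports Defs "HOL-Combinatorics.Permutations"
begin

text \<open>Restricting a colouring of the composition C to the two halves gives proper colourings
of G1 and G2: for the Y-composition this is the parity lemma (a colour class of a cubic graph
with one vertex deleted meets the three cut edges once each), for the H-composition the two new
edges get the same colour. The same parity count shows that a Kempe switch in C restricts to a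
switch of a closed edge set in each half, so equivalent colourings of C have equivalent
restrictions. Conversely, the cut edges of each half pairwise share an endpoint, so at most one
Kempe chain of a colour pair meets them, and such a chain can be traded for the complementary
chains followed by a global exchange of the two colours. Hence a Kempe sequence in one half
becomes a colour permutation followed by switches avoiding the cut, and both lift to C without
disturbing the other half. Gluing (after permuting colours to agree at the cut) shows that every
pair of classes is reached, so the classes of C correspond to pairs of classes of G1 and G2.\<close>

lemma proper_3ec_iff:
  "c \<in> proper_3ec G \<longleftrightarrow> (\<forall>e. e \<notin> edges G \<longrightarrow> c e = undefined) \<and> (\<forall>e \<in> edges G. c e \<in> {1,2,3}) \<and>
     (\<forall>e \<in> edges G. \<forall>e' \<in> edges G. e \<noteq> e' \<and> ends G e \<inter> ends G e' \<noteq> {} \<longrightarrow> c e \<noteq> c e')"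
  unfolding proper_3ec_def PiE_def Pi_def extensional_def by auto

lemma proper_3ec_colour: "c \<in> proper_3ec G \<Longrightarrow> e \<in> edges G \<Longrightarrow> c e \<in> {1,2,3}"
  unfolding proper_3ec_iff by blast

lemma proper_3ec_undefined: "c \<in> proper_3ec G \<Longrightarrow> e \<notin> edges G \<Longrightarrow> c e = undefined"
  unfolding proper_3ec_iff by blast

lemma proper_3ec_adjacent:
  "c \<in> proper_3ec G \<Longrightarrow> e \<in> edges G \<Longrightarrow> e' \<in> edges G \<Longrightarrow> e \<noteq> e' \<Longrightarrow>
     ends G e \<inter> ends G e' \<noteq> {} \<Longrightarrow> c e \<noteq> c e'"
  unfolding proper_3ec_iff by blast

lemma proper_3ec_inj_on_inc: "c \<in> proper_3ec G \<Longrightarrow> inj_on c (inc G u)"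
  unfolding inj_on_def inc_def using proper_3ec_adjacent by fastforce

lemma proper_3ecI_inj_on_inc:
  assumes "\<And>e. e \<notin> edges G \<Longrightarrow> c e = undefined" "\<And>e. e \<in> edges G \<Longrightarrow> c e \<in> {1,2,3}"
    and "\<And>u. inj_on c (inc G u)"
  shows "c \<in> proper_3ec G"
  unfolding proper_3ec_iff
proof (intro conjI allI ballI impI)
  fix e e' assume "e \<in> edges G" "e' \<in> edges G" and "e \<noteq> e' \<and> ends G e \<inter> ends G e' \<noteq> {}"
  then obtain u where "e \<in> inc G u" "e' \<in> inc G u" "e \<noteq> e'" unfolding inc_def by blast
  with assms(3)[of u] show "c e \<noteq> c e'" unfolding inj_on_def by blast
qed (use assms in auto)

subsection \<open>Kempe switches of closed edge sets\<close>

definition kempe_closed :: "('v, 'e) mgraph \<Rightarrow> ('e \<Rightarrow> nat) \<Rightarrow> nat \<Rightarrow> nat \<Rightarrow> 'e set \<Rightarrow> bool" where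
  "kempe_closed G c a b S \<longleftrightarrow> S \<subseteq> {e \<in> edges G. c e \<in> {a, b}} \<and>
      (\<forall>e e'. e \<in> S \<longrightarrow> ab_adj G c a b e e' \<longrightarrow> e' \<in> S)"

lemma kempe_switch_transpose:
  "kempe_switch c a b K = (\<lambda>e. if e \<in> K then transpose a b (c e) else c e)"
  unfolding kempe_switch_def transpose_def by (rule ext) auto

lemma ab_adj_sym: "ab_adj G c a b e e' \<Longrightarrow> ab_adj G c a b e' e"
  unfolding ab_adj_def by auto

lemma kempe_closedD: "kempe_closed G c a b S \<Longrightarrow> e \<in> S \<Longrightarrow> e \<in> edges G \<and> c e \<in> {a,b}"
  unfolding kempe_closed_def by auto

lemma kempe_closed_class: "kempe_closed G c a b {e \<in> edges G. c e \<in> {a,b}}"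
  unfolding kempe_closed_def ab_adj_def by blast

lemma kempe_closed_Diff:
  assumes "kempe_closed G c a b S" "kempe_closed G c a b T"
  shows "kempe_closed G c a b (S - T)"
  unfolding kempe_closed_def
proof (intro conjI allI impI)
  fix e e' assume "e \<in> S - T" "ab_adj G c a b e e'"
  moreover from this have "e' \<in> T \<Longrightarrow> e \<in> T"
    using assms(2) ab_adj_sym unfolding kempe_closed_def by metis
  ultimately show "e' \<in> S - T" using assms(1) unfolding kempe_closed_def by blast
qed (use assms in \<open>auto simp: kempe_closed_def\<close>)

lemma kempe_chain_closed: assumes "kempe_chain G c a b K" shows "kempe_closed G c a b K"
proof -
  obtain e0 where e0: "e0 \<in> edges G" "c e0 \<in> {a,b}" and K: "K = {e. (ab_adj G c a b)\<^sup>*\<^sup>* e0 e}"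
    using assms unfolding kempe_chain_def by auto
  have "e \<in> edges G \<and> c e \<in> {a,b}" if "(ab_adj G c a b)\<^sup>*\<^sup>* e0 e" for e
    using that e0 by (induction rule: rtranclp_induct) (auto simp: ab_adj_def)
  then show ?thesis unfolding kempe_closed_def K by (auto intro: rtranclp.rtrancl_into_rtrancl)
qed

lemma kempe_chain_subset:
  assumes "kempe_closed G c a b S" "e0 \<in> S"
  shows "kempe_chain G c a b {e. (ab_adj G c a b)\<^sup>*\<^sup>* e0 e}" "{e. (ab_adj G c a b)\<^sup>*\<^sup>* e0 e} \<subseteq> S"
proof -
  show "kempe_chain G c a b {e. (ab_adj G c a b)\<^sup>*\<^sup>* e0 e}"
    unfolding kempe_chain_def using kempe_closedD[OF assms] by auto
  show "{e. (ab_adj G c a b)\<^sup>*\<^sup>* e0 e} \<subseteq> S"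
  proof
    fix e assume "e \<in> {e. (ab_adj G c a b)\<^sup>*\<^sup>* e0 e}"
    then have "(ab_adj G c a b)\<^sup>*\<^sup>* e0 e" by simp
    then show "e \<in> S" using assms unfolding kempe_closed_def by (induction rule: rtranclp_induct) auto
  qed
qed

lemma kempe_switch_in_ab: "kempe_switch c a b S e \<in> {a,b} \<longleftrightarrow> c e \<in> {a,b}"
  unfolding kempe_switch_def by auto

lemma ab_adj_kempe_switch: "ab_adj G (kempe_switch c a b S) a b = ab_adj G c a b"
  unfolding ab_adj_def by (intro ext) (simp only: kempe_switch_in_ab)

lemma kempe_closed_kempe_switch:
  "kempe_closed G (kempe_switch c a b S) a b T \<longleftrightarrow> kempe_closed G c a b T"
  unfolding kempe_closed_def ab_adj_kempe_switch using kempe_switch_in_ab[of c a b S] by blast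

lemma kempe_switch_kempe_switch: "kempe_switch (kempe_switch c a b S) a b S = c"
  unfolding kempe_switch_transpose by auto

lemma kempe_switch_proper:
  assumes c: "c \<in> proper_3ec G" and S: "kempe_closed G c a b S" and ab: "a \<in> {1,2,3}" "b \<in> {1,2,3}"
  shows "kempe_switch c a b S \<in> proper_3ec G"
  unfolding proper_3ec_iff
proof (intro conjI ballI allI impI)
  fix e assume "e \<notin> edges G"
  then show "kempe_switch c a b S e = undefined"
    using c kempe_closedD[OF S] proper_3ec_undefined unfolding kempe_switch_def by metis
next
  fix e assume "e \<in> edges G"
  then show "kempe_switch c a b S e \<in> {1,2,3}"
    using proper_3ec_colour[OF c] ab unfolding kempe_switch_def by auto
next
  fix e e' assume e: "e \<in> edges G" "e' \<in> edges G" and ee: "e \<noteq> e' \<and> ends G e \<inter> ends G e' \<noteq> {}"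
  have ne: "c e \<noteq> c e'" using proper_3ec_adjacent[OF c e] ee by blast
  have out: "c y \<notin> {a,b}"
    if "x \<in> S" "y \<notin> S" "y \<in> edges G" "ends G x \<inter> ends G y \<noteq> {}" for x y
    using that S kempe_closedD[OF S that(1)] unfolding kempe_closed_def ab_adj_def by blast
  show "kempe_switch c a b S e \<noteq> kempe_switch c a b S e'"
  proof (cases "e \<in> S"; cases "e' \<in> S")
    assume "e \<in> S" "e' \<in> S"
    then show ?thesis using ne unfolding kempe_switch_transpose by (auto dest: transpose_eq_imp_eq)
  next
    assume h: "e \<in> S" "e' \<notin> S"
    then show ?thesis using out[where x=e and y=e'] e ee kempe_closedD[OF S h(1)]
      unfolding kempe_switch_transpose by (auto simp: transpose_eq_iff)
  next
    assume h: "e \<notin> S" "e' \<in> S"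
    moreover have "ends G e' \<inter> ends G e \<noteq> {}" using ee by blast
    ultimately show ?thesis using out[where x=e' and y=e] e kempe_closedD[OF S h(2)]
      unfolding kempe_switch_transpose by (auto simp: transpose_eq_iff)
  next
    assume "e \<notin> S" "e' \<notin> S"
    then show ?thesis using ne unfolding kempe_switch_transpose by simp
  qed
qed

lemma kempe_step_proper: "kempe_step G c c' \<Longrightarrow> c' \<in> proper_3ec G"
  unfolding kempe_step_def using kempe_switch_proper kempe_chain_closed by blast

lemma kempe_chain_kempe_switch:
  assumes "kempe_chain G c a b K" shows "kempe_chain G (kempe_switch c a b K) a b K"
  using assms unfolding kempe_chain_def ab_adj_kempe_switch kempe_switch_in_ab by auto

lemma kempe_step_sym: assumes "kempe_step G c c'" shows "kempe_step G c' c"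
proof -
  obtain a b K where ab: "a \<in> {1,2,3}" "b \<in> {1,2,3}" "a \<noteq> b"
    and K: "kempe_chain G c a b K" and c': "c' = kempe_switch c a b K"
    using assms unfolding kempe_step_def by auto
  show ?thesis unfolding kempe_step_def
    using kempe_step_proper[OF assms] ab kempe_chain_kempe_switch[OF K] c'
      kempe_switch_kempe_switch by metis
qed

lemma kempe_steps_proper: "(kempe_step G)\<^sup>*\<^sup>* c c' \<Longrightarrow> c \<in> proper_3ec G \<Longrightarrow> c' \<in> proper_3ec G"
  by (induction rule: rtranclp_induct) (auto intro: kempe_step_proper)

lemma equiv_kempe_equiv: "equiv (proper_3ec G) (kempe_equiv G)"
proof (rule equivI)
  show "kempe_equiv G \<subseteq> proper_3ec G \<times> proper_3ec G" "refl_on (proper_3ec G) (kempe_equiv G)"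
    unfolding refl_on_def kempe_equiv_def using kempe_steps_proper by auto
  have "(kempe_step G)\<^sup>*\<^sup>* c' c" if "(kempe_step G)\<^sup>*\<^sup>* c c'" for c c'
    using that by (induction rule: rtranclp_induct)
      (auto intro: kempe_step_sym converse_rtranclp_into_rtranclp)
  then show "sym (kempe_equiv G)"
    unfolding sym_def kempe_equiv_def using kempe_steps_proper by blast
  show "trans (kempe_equiv G)"
    unfolding trans_def kempe_equiv_def by auto
qed

lemma kempe_equiv_trans:
  "(c, c') \<in> kempe_equiv G \<Longrightarrow> (c', c'') \<in> kempe_equiv G \<Longrightarrow> (c, c'') \<in> kempe_equiv G"
  using equiv_kempe_equiv[of G] unfolding equiv_def trans_def by blast

lemma kempe_equiv_sym: "(c, c') \<in> kempe_equiv G \<Longrightarrow> (c', c) \<in> kempe_equiv G"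
  using equiv_kempe_equiv[of G] unfolding equiv_def sym_def by blast

lemma kempe_equiv_refl: "c \<in> proper_3ec G \<Longrightarrow> (c, c) \<in> kempe_equiv G"
  unfolding kempe_equiv_def by auto

lemma kempe_equiv_proper: "(c, c') \<in> kempe_equiv G \<Longrightarrow> c \<in> proper_3ec G \<and> c' \<in> proper_3ec G"
  unfolding kempe_equiv_def using kempe_steps_proper by auto

lemma kempe_equiv_kempe_step: "kempe_step G c c' \<Longrightarrow> (c, c') \<in> kempe_equiv G"
  unfolding kempe_equiv_def kempe_step_def by auto

lemma kempe_equiv_kempe_switch:
  assumes "finite (edges G)" "c \<in> proper_3ec G" "kempe_closed G c a b S"
    and "a \<in> {1,2,3}" "b \<in> {1,2,3}" "a \<noteq> b"
  shows "(c, kempe_switch c a b S) \<in> kempe_equiv G"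
  using assms(2,3)
proof (induction "card S" arbitrary: c S rule: less_induct)
  case less
  show ?case
  proof (cases "S = {}")
    case True
    then show ?thesis using less kempe_equiv_refl unfolding kempe_switch_def by auto
  next
    case False
    then obtain e0 where e0: "e0 \<in> S" by auto
    define K where "K = {e. (ab_adj G c a b)\<^sup>*\<^sup>* e0 e}"
    have K: "kempe_chain G c a b K" "K \<subseteq> S" "e0 \<in> K"
      using kempe_chain_subset[OF less(3) e0] unfolding K_def by auto
    define c1 where "c1 = kempe_switch c a b K"
    have step: "kempe_step G c c1" unfolding kempe_step_def c1_def using less(2) K(1) assms(4-6) by auto
    have closed: "kempe_closed G c1 a b (S - K)" unfolding c1_def
      using kempe_closed_kempe_switch kempe_chain_closed[OF K(1)] kempe_closed_Diff less(3) by metis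
    have "finite S" using assms(1) kempe_closedD[OF less(3)] by (meson finite_subset subsetI)
    then have "card (S - K) < card S" using K(3) e0 by (intro psubset_card_mono) auto
    then have "(c1, kempe_switch c1 a b (S - K)) \<in> kempe_equiv G"
      using less(1) kempe_step_proper[OF step] closed by blast
    moreover have "kempe_switch c1 a b (S - K) = kempe_switch c a b S"
      unfolding c1_def kempe_switch_transpose fun_eq_iff using K(2) by auto
    ultimately show ?thesis using kempe_equiv_kempe_step[OF step] kempe_equiv_trans by metis
  qed
qed

definition permute_colours :: "('v, 'e) mgraph \<Rightarrow> (nat \<Rightarrow> nat) \<Rightarrow> ('e \<Rightarrow> nat) \<Rightarrow> 'e \<Rightarrow> nat" where
  "permute_colours G \<pi> c = (\<lambda>e. if e \<in> edges G then \<pi> (c e) else undefined)"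

lemma permute_colours_proper:
  assumes c: "c \<in> proper_3ec G" and \<pi>: "\<pi> permutes {1,2,3}"
  shows "permute_colours G \<pi> c \<in> proper_3ec G"
  unfolding proper_3ec_iff
proof (intro conjI allI ballI impI)
  fix e assume "e \<in> edges G"
  then show "permute_colours G \<pi> c e \<in> {1,2,3}"
    unfolding permute_colours_def using proper_3ec_colour[OF c] permutes_in_image[OF \<pi>] by simp
next
  fix e e' assume e: "e \<in> edges G" "e' \<in> edges G" and "e \<noteq> e' \<and> ends G e \<inter> ends G e' \<noteq> {}"
  then have "c e \<noteq> c e'" using proper_3ec_adjacent[OF c] by blast
  then show "permute_colours G \<pi> c e \<noteq> permute_colours G \<pi> c e'"
    unfolding permute_colours_def using e permutes_inj[OF \<pi>] by (simp add: inj_eq)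
qed (simp add: permute_colours_def)

lemma permute_colours_comp:
  "permute_colours G \<sigma> (permute_colours G \<pi> c) = permute_colours G (\<sigma> \<circ> \<pi>) c"
  unfolding permute_colours_def by auto

lemma permute_colours_id: "c \<in> proper_3ec G \<Longrightarrow> permute_colours G id c = c"
  unfolding permute_colours_def using proper_3ec_undefined by fastforce

lemma permute_colours_transpose:
  "c \<in> proper_3ec G \<Longrightarrow>
     permute_colours G (transpose a b) c = kempe_switch c a b {e \<in> edges G. c e \<in> {a,b}}"
  unfolding permute_colours_def kempe_switch_transpose fun_eq_iff
  using proper_3ec_undefined by fastforce

lemma kempe_equiv_permute_colours:
  assumes fin: "finite (edges G)" and c: "c \<in> proper_3ec G" and \<pi>: "\<pi> permutes {1,2,3}"
  shows "(c, permute_colours G \<pi> c) \<in> kempe_equiv G"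
proof -
  have "finite {1,2,3::nat}" by simp
  from \<pi> this show ?thesis
  proof (induction rule: permutes_induct)
    case id
    show ?case using kempe_equiv_refl[OF c] permute_colours_id[OF c] by metis
  next
    case (swap a b \<sigma>)
    have "permute_colours G \<sigma> c \<in> proper_3ec G" using permute_colours_proper[OF c \<open>\<sigma> permutes {1,2,3}\<close>] .
    then have "(permute_colours G \<sigma> c, permute_colours G (transpose a b) (permute_colours G \<sigma> c))
        \<in> kempe_equiv G"
      using kempe_equiv_kempe_switch[OF fin _ kempe_closed_class swap(1-3)] permute_colours_transpose
      by metis
    then show ?case
      using \<open>(c, permute_colours G \<sigma> c) \<in> kempe_equiv G\<close> kempe_equiv_trans
      unfolding permute_colours_comp by blast
  qed
qed

definition avoiding_switch :: "('v, 'e) mgraph \<Rightarrow> 'e set \<Rightarrow> ('e \<Rightarrow> nat) \<Rightarrow> ('e \<Rightarrow> nat) \<Rightarrow> bool" where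
  "avoiding_switch G X c c' \<longleftrightarrow> c \<in> proper_3ec G \<and> (\<exists>a b S. a \<in> {1,2,3} \<and> b \<in> {1,2,3} \<and> a \<noteq> b \<and>
      kempe_closed G c a b S \<and> S \<inter> X = {} \<and> c' = kempe_switch c a b S)"

lemma avoiding_switch_permute_colours:
  assumes sw: "avoiding_switch G X c c'" and \<sigma>: "\<sigma> permutes {1,2,3}"
  shows "avoiding_switch G X (permute_colours G \<sigma> c) (permute_colours G \<sigma> c')"
proof -
  obtain a b S where c: "c \<in> proper_3ec G" and ab: "a \<in> {1,2,3}" "b \<in> {1,2,3}" "a \<noteq> b"
    and S: "kempe_closed G c a b S" "S \<inter> X = {}" and c': "c' = kempe_switch c a b S"
    using sw unfolding avoiding_switch_def by blast
  have inj: "\<sigma> x = \<sigma> y \<longleftrightarrow> x = y" for x y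
    using permutes_inj[OF \<sigma>] by (simp add: inj_eq)
  have mem: "permute_colours G \<sigma> c e \<in> {\<sigma> a, \<sigma> b} \<longleftrightarrow> c e \<in> {a,b}" if "e \<in> edges G" for e
    using that unfolding permute_colours_def by (simp add: inj)
  have "ab_adj G (permute_colours G \<sigma> c) (\<sigma> a) (\<sigma> b) e e' = ab_adj G c a b e e'" for e e'
    unfolding ab_adj_def using mem[of e] mem[of e'] by blast
  then have "ab_adj G (permute_colours G \<sigma> c) (\<sigma> a) (\<sigma> b) = ab_adj G c a b"
    by (intro ext)
  then have S': "kempe_closed G (permute_colours G \<sigma> c) (\<sigma> a) (\<sigma> b) S"
    using S(1) mem unfolding kempe_closed_def by auto
  have "\<sigma> (transpose a b x) = transpose (\<sigma> a) (\<sigma> b) (\<sigma> x)" for x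
    unfolding transpose_def by (simp add: inj)
  then have "permute_colours G \<sigma> c' = kempe_switch (permute_colours G \<sigma> c) (\<sigma> a) (\<sigma> b) S"
    using kempe_closedD[OF S(1)] unfolding c' permute_colours_def kempe_switch_transpose fun_eq_iff
    by auto
  moreover have "\<sigma> a \<noteq> \<sigma> b" "\<sigma> a \<in> {1,2,3}" "\<sigma> b \<in> {1,2,3}"
    using ab permutes_in_image[OF \<sigma>] by (auto simp: inj)
  ultimately show ?thesis
    unfolding avoiding_switch_def using permute_colours_proper[OF c \<sigma>] S' S(2) by blast
qed

lemma avoiding_switches_permute_colours:
  "(avoiding_switch G X)\<^sup>*\<^sup>* c c' \<Longrightarrow> \<sigma> permutes {1,2,3} \<Longrightarrow>
     (avoiding_switch G X)\<^sup>*\<^sup>* (permute_colours G \<sigma> c) (permute_colours G \<sigma> c')"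
  by (induction rule: rtranclp_induct)
    (blast intro: avoiding_switch_permute_colours rtranclp.rtrancl_into_rtrancl)+

lemma kempe_switch_complement:
  assumes "c \<in> proper_3ec G" "kempe_closed G c a b K"
  shows "kempe_switch c a b K =
    permute_colours G (transpose a b) (kempe_switch c a b ({e \<in> edges G. c e \<in> {a,b}} - K))"
  using assms kempe_closedD[OF assms(2)] proper_3ec_undefined[OF assms(1)]
  unfolding permute_colours_def kempe_switch_transpose fun_eq_iff
  by (auto simp: transpose_def)

text \<open>Since the edges of X pairwise share an endpoint, a Kempe chain meeting X
contains every edge of X with a colour of the pair; the rest of the two colour classes avoids X.\<close>
lemma kempe_closed_complement_avoids:
  assumes K: "kempe_closed G c a b K" "e0 \<in> K \<inter> X"
    and X: "\<And>e e'. e \<in> X \<Longrightarrow> e' \<in> X \<Longrightarrow> ends G e \<inter> ends G e' \<noteq> {}"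
  shows "({e \<in> edges G. c e \<in> {a,b}} - K) \<inter> X = {}"
proof (rule ccontr)
  assume "({e \<in> edges G. c e \<in> {a,b}} - K) \<inter> X \<noteq> {}"
  then obtain e where e: "e \<in> edges G" "c e \<in> {a,b}" "e \<notin> K" "e \<in> X" by blast
  have "ab_adj G c a b e0 e"
    unfolding ab_adj_def using kempe_closedD[OF K(1)] K(2) e X[of e0 e] by blast
  then show False using K e unfolding kempe_closed_def by blast
qed

text \<open>A Kempe chain meeting X is traded for the complementary switch, which avoids X,
followed by a global exchange of the two colours.\<close>
lemma kempe_step_avoiding_or_transposed:
  assumes X: "\<And>e e'. e \<in> X \<Longrightarrow> e' \<in> X \<Longrightarrow> ends G e \<inter> ends G e' \<noteq> {}"
    and step: "kempe_step G y z"
  shows "avoiding_switch G X y z \<or> (\<exists>a b y'. a \<in> {1,2,3} \<and> b \<in> {1,2,3} \<and>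
      avoiding_switch G X y y' \<and> z = permute_colours G (transpose a b) y')"
proof -
  obtain a b K0 where y: "y \<in> proper_3ec G" and ab: "a \<in> {1,2,3}" "b \<in> {1,2,3}" "a \<noteq> b"
    and K0: "kempe_chain G y a b K0" and z: "z = kempe_switch y a b K0"
    using step unfolding kempe_step_def by auto
  have K: "kempe_closed G y a b K0" using kempe_chain_closed[OF K0] .
  show ?thesis
  proof (cases "K0 \<inter> X = {}")
    case True
    then show ?thesis unfolding avoiding_switch_def using y ab K z by auto
  next
    case False
    define T where "T = {e \<in> edges G. y e \<in> {a,b}} - K0"
    have "kempe_closed G y a b T"
      unfolding T_def by (rule kempe_closed_Diff[OF kempe_closed_class K])
    moreover have "T \<inter> X = {}"
      using False kempe_closed_complement_avoids[OF K _ X] unfolding T_def by blast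
    ultimately have "avoiding_switch G X y (kempe_switch y a b T)"
      unfolding avoiding_switch_def using y ab by auto
    moreover have "z = permute_colours G (transpose a b) (kempe_switch y a b T)"
      unfolding z T_def by (rule kempe_switch_complement[OF y K])
    ultimately show ?thesis using ab by blast
  qed
qed

text \<open>The colour exchanges of the previous lemma commute with avoiding switches and are
collected in front.\<close>
lemma kempe_equiv_imp_avoiding_switches:
  assumes X: "\<And>e e'. e \<in> X \<Longrightarrow> e' \<in> X \<Longrightarrow> ends G e \<inter> ends G e' \<noteq> {}"
    and equiv: "(c, c') \<in> kempe_equiv G"
  shows "\<exists>\<pi>. \<pi> permutes {1,2,3} \<and> (avoiding_switch G X)\<^sup>*\<^sup>* (permute_colours G \<pi> c) c'"
proof -
  have c: "c \<in> proper_3ec G" and steps: "(kempe_step G)\<^sup>*\<^sup>* c c'"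
    using equiv unfolding kempe_equiv_def by auto
  from steps show ?thesis
  proof (induction rule: rtranclp_induct)
    case base
    then show ?case using permute_colours_id[OF c] permutes_id by (metis rtranclp.rtrancl_refl)
  next
    case (step y z)
    obtain \<pi> where \<pi>: "\<pi> permutes {1,2,3}" and avoid: "(avoiding_switch G X)\<^sup>*\<^sup>* (permute_colours G \<pi> c) y"
      using step.IH by blast
    from kempe_step_avoiding_or_transposed[OF X step.hyps(2)] show ?case
    proof
      assume "avoiding_switch G X y z"
      then show ?thesis using \<pi> rtranclp.rtrancl_into_rtrancl[OF avoid] by blast
    next
      assume "\<exists>a b y'. a \<in> {1,2,3} \<and> b \<in> {1,2,3} \<and>
        avoiding_switch G X y y' \<and> z = permute_colours G (transpose a b) y'"
      then obtain a b y' where ab: "a \<in> {1,2,3}" "b \<in> {1,2,3}"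
        and y': "avoiding_switch G X y y'" and z: "z = permute_colours G (transpose a b) y'" by blast
      have "(avoiding_switch G X)\<^sup>*\<^sup>* (permute_colours G \<pi> c) y'"
        by (rule rtranclp.rtrancl_into_rtrancl[where r="avoiding_switch G X", OF avoid y'])
      then have "(avoiding_switch G X)\<^sup>*\<^sup>* (permute_colours G (transpose a b) (permute_colours G \<pi> c)) z"
        unfolding z by (rule avoiding_switches_permute_colours[OF _ permutes_swap_id[OF ab]])
      then show ?thesis
        using permutes_compose[OF \<pi> permutes_swap_id[OF ab]] unfolding permute_colours_comp by blast
    qed
  qed
qed

lemma sum_card_inc_Int:
  assumes "finite F" "finite W" "F \<subseteq> edges G"
  shows "(\<Sum>u\<in>W. card (inc G u \<inter> F)) = (\<Sum>e\<in>F. card (ends G e \<inter> W))"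
proof -
  have "card (inc G u \<inter> F) = (\<Sum>e\<in>F. if u \<in> ends G e then 1 else 0)" for u
  proof -
    have "inc G u \<inter> F = {e \<in> F. u \<in> ends G e}" unfolding inc_def using assms(3) by blast
    then show ?thesis using assms(1) by (simp add: sum.inter_filter[symmetric])
  qed
  moreover have "card (ends G e \<inter> W) = (\<Sum>u\<in>W. if u \<in> ends G e then 1 else 0)" for e
  proof -
    have "ends G e \<inter> W = {u \<in> W. u \<in> ends G e}" by blast
    then show ?thesis using assms(2) by (simp add: sum.inter_filter[symmetric])
  qed
  ultimately show ?thesis using sum.swap by simp
qed

lemma handshake:
  assumes G: "wf_mgraph G" and F: "F \<subseteq> edges G"
  shows "2 * card F = (\<Sum>u\<in>verts G. card (inc G u \<inter> F))"
proof -
  have fin: "finite F" "finite (verts G)" using G F finite_subset unfolding wf_mgraph_def by auto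
  have "card (ends G e \<inter> verts G) = 2" if "e \<in> F" for e
    using G that F unfolding wf_mgraph_def by (metis Int_absorb2 subsetD)
  then show ?thesis unfolding sum_card_inc_Int[OF fin F] by simp
qed

lemma handshake_vertex:
  assumes "wf_mgraph G" "F \<subseteq> edges G" "v \<in> verts G"
  shows "2 * card F = (\<Sum>u\<in>verts G - {v}. card (inc G u \<inter> F)) + card (inc G v \<inter> F)"
proof -
  have "finite (verts G)" using assms(1) unfolding wf_mgraph_def by simp
  then show ?thesis
    using handshake[OF assms(1,2)] sum.remove[OF _ assms(3), of "\<lambda>u. card (inc G u \<inter> F)"] by simp
qed

lemma cubic_wf: "cubic G \<Longrightarrow> wf_mgraph G"
  and cubic_card_inc: "cubic G \<Longrightarrow> u \<in> verts G \<Longrightarrow> card (inc G u) = 3"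
  and cubic_finite_edges: "cubic G \<Longrightarrow> finite (edges G)"
  and cubic_finite_verts: "cubic G \<Longrightarrow> finite (verts G)"
  and cubic_ends_subset: "cubic G \<Longrightarrow> e \<in> edges G \<Longrightarrow> ends G e \<subseteq> verts G"
  and cubic_card_ends: "cubic G \<Longrightarrow> e \<in> edges G \<Longrightarrow> card (ends G e) = 2"
  unfolding cubic_def wf_mgraph_def by auto

lemma cubic_even_card_verts:
  assumes "cubic G" shows "even (card (verts G))"
proof -
  have "2 * card (edges G) = (\<Sum>u\<in>verts G. card (inc G u \<inter> edges G))"
    by (rule handshake[OF cubic_wf[OF assms]]) simp
  also have "\<dots> = 3 * card (verts G)"
    using cubic_card_inc[OF assms] by (simp add: inc_def Int_absorb2 subsetI)
  finally show ?thesis by presburger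
qed

lemma inc_subset_edges: "inc G u \<subseteq> edges G"
  unfolding inc_def by blast

lemma inc_iff: "e \<in> inc G u \<longleftrightarrow> e \<in> edges G \<and> u \<in> ends G e"
  unfolding inc_def by blast

lemma finite_inc: "cubic G \<Longrightarrow> finite (inc G u)"
  using finite_subset[OF inc_subset_edges cubic_finite_edges] .

lemma ends_other_end:
  assumes "wf_mgraph G" "e \<in> inc G v"
  shows "ends G e = {v, other_end G e v}" "other_end G e v \<noteq> v"
proof -
  have e: "card (ends G e) = 2" "v \<in> ends G e" using assms unfolding wf_mgraph_def inc_def by auto
  then obtain w where "ends G e = {v, w}" "w \<noteq> v"
    unfolding card_2_iff by (metis insert_commute insertE singletonD)
  moreover from this have "other_end G e v = w" unfolding other_end_def by auto
  ultimately show "ends G e = {v, other_end G e v}" "other_end G e v \<noteq> v" by auto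
qed

lemma bij_betw_colours:
  assumes "card A = 3" "inj_on c A" "c ` A \<subseteq> {1,2,3::nat}"
  shows "bij_betw c A {1,2,3}"
  using assms card_image[OF assms(2)] card_subset_eq[OF _ assms(3)] unfolding bij_betw_def by simp

lemma card_colour_class: "bij_betw c A C \<Longrightarrow> B \<subseteq> C \<Longrightarrow> card {e \<in> A. c e \<in> B} = card B"
  by (rule bij_betw_same_card[of c]) (auto simp: bij_betw_def inj_on_def)

lemma proper_3ec_bij_betw_inc:
  assumes "c \<in> proper_3ec G" "card (inc G u) = 3"
  shows "bij_betw c (inc G u) {1,2,3}"
  using bij_betw_colours[OF assms(2) proper_3ec_inj_on_inc[OF assms(1)]] proper_3ec_colour[OF assms(1)]
  unfolding inc_def by blast

lemma kempe_closed_at_vertex: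
  assumes K: "kempe_closed G c a b K" and u: "u \<in> ends G e" "e \<in> K"
  shows "inc G u \<inter> K = {e \<in> inc G u. c e \<in> {a,b}}"
proof
  show "{e \<in> inc G u. c e \<in> {a,b}} \<subseteq> inc G u \<inter> K"
  proof
    fix e' assume "e' \<in> {e \<in> inc G u. c e \<in> {a,b}}"
    then have "ab_adj G c a b e e'" using u kempe_closedD[OF K u(2)] unfolding ab_adj_def inc_def by blast
    then show "e' \<in> inc G u \<inter> K" using K u \<open>e' \<in> _\<close> unfolding kempe_closed_def by blast
  qed
qed (use kempe_closedD[OF K] in blast)

text \<open>A closed set meets each vertex in no edge or in both edges coloured a or b.\<close>
lemma even_card_inc_Int_kempe_closed:
  assumes c: "c \<in> proper_3ec G" and K: "kempe_closed G c a b K"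
    and ab: "a \<in> {1,2,3}" "b \<in> {1,2,3}" "a \<noteq> b" and u: "card (inc G u) = 3"
  shows "even (card (inc G u \<inter> K))"
proof (cases "inc G u \<inter> K = {}")
  case False
  then obtain e where "u \<in> ends G e" "e \<in> K" unfolding inc_def by blast
  then have "card (inc G u \<inter> K) = card {a,b}"
    using kempe_closed_at_vertex[OF K] card_colour_class[OF proper_3ec_bij_betw_inc[OF c u], of "{a,b}"] ab
    by simp
  then show ?thesis using ab by simp
qed simp

lemma three_ones_of_same_parity:
  fixes m n1 n2 n3 :: nat
  assumes "even (m + n1)" "even (m + n2)" "even (m + n3)" "n1 + n2 + n3 = 3"
  shows "n1 = 1 \<and> n2 = 1 \<and> n3 = 1"
proof (cases "even m")
  case True
  then have "even (n1 + n2 + n3)" using assms(1-3) by simp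
  then show ?thesis using assms(4) by simp
next
  case False
  then have "odd n1" "odd n2" "odd n3" using assms by auto
  then have "n1 \<ge> 1" "n2 \<ge> 1" "n3 \<ge> 1" by (auto intro: Suc_leI odd_pos)
  then show ?thesis using assms(4) by linarith
qed

lemma permutation_matching_colours:
  assumes "bij_betw \<alpha> A B" "bij_betw \<beta> A B"
  shows "\<exists>\<pi>. \<pi> permutes B \<and> (\<forall>x\<in>A. \<pi> (\<beta> x) = \<alpha> x)"
proof -
  define \<pi> where "\<pi> y = (if y \<in> B then \<alpha> (inv_into A \<beta> y) else y)" for y
  have "bij_betw (\<alpha> \<circ> inv_into A \<beta>) B B"
    using bij_betw_trans[OF bij_betw_inv_into[OF assms(2)] assms(1)] .
  then have "bij_betw \<pi> B B"
    by (rule bij_betw_cong[THEN iffD1, rotated]) (simp add: \<pi>_def)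
  then have "\<pi> permutes B" by (rule bij_imp_permutes) (simp add: \<pi>_def)
  moreover have "\<pi> (\<beta> x) = \<alpha> x" if "x \<in> A" for x
    using that assms(2) bij_betw_inv_into_left[OF assms(2)] unfolding \<pi>_def bij_betw_def by auto
  ultimately show ?thesis by blast
qed

lemma permutes_fixing_colour:
  assumes \<pi>: "\<pi> permutes {1,2,3::nat}" and \<alpha>: "\<alpha> \<in> {1,2,3}" "\<pi> \<alpha> = \<alpha>" and "\<pi> \<noteq> id"
  shows "\<exists>\<beta> \<gamma>. \<beta> \<in> {1,2,3} \<and> \<gamma> \<in> {1,2,3} \<and> \<beta> \<noteq> \<gamma> \<and> \<alpha> \<notin> {\<beta>, \<gamma>} \<and> \<pi> = transpose \<beta> \<gamma>"
proof -
  obtain \<beta> \<gamma> where U: "{1,2,3::nat} = {\<alpha>, \<beta>, \<gamma>}" and d: "\<beta> \<noteq> \<gamma>" "\<alpha> \<notin> {\<beta>, \<gamma>}"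
  proof -
    consider "\<alpha> = 1" | "\<alpha> = 2" | "\<alpha> = 3" using \<alpha>(1) by blast
    then show thesis
    proof cases
      case 1 show thesis by (rule that[of 2 3]) (auto simp: 1)
    next
      case 2 show thesis by (rule that[of 1 3]) (auto simp: 2)
    next
      case 3 show thesis by (rule that[of 1 2]) (auto simp: 3)
    qed
  qed
  have inj: "\<pi> x = \<pi> y \<longleftrightarrow> x = y" for x y using permutes_inj[OF \<pi>] by (simp add: inj_eq)
  have mem: "\<pi> x \<in> {\<alpha>, \<beta>, \<gamma>} \<longleftrightarrow> x \<in> {\<alpha>, \<beta>, \<gamma>}" for x
    using permutes_in_image[OF \<pi>, of x] unfolding U .
  have b: "\<pi> \<beta> \<in> {\<beta>, \<gamma>}" and g: "\<pi> \<gamma> \<in> {\<beta>, \<gamma>}"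
    using mem[of \<beta>] mem[of \<gamma>] inj[of \<beta> \<alpha>] inj[of \<gamma> \<alpha>] \<alpha>(2) d by auto
  have other: "\<pi> x = x" if "x \<notin> {\<alpha>, \<beta>, \<gamma>}" for x
    using permutes_not_in[OF \<pi>, of x] that unfolding U by simp
  show ?thesis
  proof (cases "\<pi> \<beta> = \<beta>")
    case True
    then have "\<pi> \<gamma> = \<gamma>" using g inj[of \<gamma> \<beta>] d by auto
    then have "\<pi> x = x" for x using True \<alpha>(2) other[of x] by (cases "x \<in> {\<alpha>, \<beta>, \<gamma>}") auto
    then show ?thesis using \<open>\<pi> \<noteq> id\<close> by (simp add: fun_eq_iff)
  next
    case False
    then have "\<pi> \<beta> = \<gamma>" "\<pi> \<gamma> = \<beta>" using b g inj[of \<gamma> \<beta>] d by auto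
    then have "\<pi> x = transpose \<beta> \<gamma> x" for x
      using \<alpha>(2) other[of x] d by (cases "x \<in> {\<alpha>, \<beta>, \<gamma>}") (auto simp: transpose_def)
    then have "\<pi> = transpose \<beta> \<gamma>" by (simp add: fun_eq_iff)
    moreover have "\<beta> \<in> {1,2,3}" "\<gamma> \<in> {1,2,3}" unfolding U by simp_all
    ultimately show ?thesis using d by blast
  qed
qed

lemma Image_image_equiv_class:
  assumes "equiv P R" "equiv P1 R1" "c \<in> P" and "\<And>c'. (c, c') \<in> R \<Longrightarrow> (r c, r c') \<in> R1"
  shows "R1 `` (r ` (R `` {c})) = R1 `` {r c}"
proof
  show "R1 `` (r ` (R `` {c})) \<subseteq> R1 `` {r c}"
    using assms(2,4) unfolding equiv_def trans_def by blast
  show "R1 `` {r c} \<subseteq> R1 `` (r ` (R `` {c}))"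
    using equiv_class_self[OF assms(1,3)] by blast
qed

lemma card_quotient_eq_mult:
  assumes eq: "equiv P R" "equiv P1 R1" "equiv P2 R2"
    and into: "\<And>c. c \<in> P \<Longrightarrow> r1 c \<in> P1 \<and> r2 c \<in> P2"
    and iff: "\<And>c c'. c \<in> P \<Longrightarrow> c' \<in> P \<Longrightarrow> (c, c') \<in> R \<longleftrightarrow> (r1 c, r1 c') \<in> R1 \<and> (r2 c, r2 c') \<in> R2"
    and onto: "\<And>c1 c2. c1 \<in> P1 \<Longrightarrow> c2 \<in> P2 \<Longrightarrow> \<exists>c \<in> P. (r1 c, c1) \<in> R1 \<and> (r2 c, c2) \<in> R2"
  shows "card (P // R) = card (P1 // R1) * card (P2 // R2)"
proof -
  define \<Phi> where "\<Phi> X = (R1 `` (r1 ` X), R2 `` (r2 ` X))" for X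
  have \<Phi>: "\<Phi> (R `` {c}) = (R1 `` {r1 c}, R2 `` {r2 c})" if c: "c \<in> P" for c
  proof -
    have rel: "(r1 c, r1 c') \<in> R1 \<and> (r2 c, r2 c') \<in> R2" if "(c, c') \<in> R" for c'
      using iff[OF c] that eq(1) unfolding equiv_def refl_on_def by blast
    have "R1 `` (r1 ` (R `` {c})) = R1 `` {r1 c}"
      by (rule Image_image_equiv_class[OF eq(1,2) c]) (use rel in blast)
    moreover have "R2 `` (r2 ` (R `` {c})) = R2 `` {r2 c}"
      by (rule Image_image_equiv_class[OF eq(1,3) c]) (use rel in blast)
    ultimately show ?thesis unfolding \<Phi>_def by simp
  qed
  have "inj_on \<Phi> (P // R)"
  proof (rule inj_onI)
    fix X Y assume "X \<in> P // R" "Y \<in> P // R" "\<Phi> X = \<Phi> Y"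
    then obtain c d where c: "c \<in> P" "X = R `` {c}" and d: "d \<in> P" "Y = R `` {d}"
      and "R1 `` {r1 c} = R1 `` {r1 d}" "R2 `` {r2 c} = R2 `` {r2 d}"
      using \<Phi> by (auto elim!: quotientE)
    then have "(r1 c, r1 d) \<in> R1" "(r2 c, r2 d) \<in> R2"
      using eq_equiv_class_iff[OF eq(2)] eq_equiv_class_iff[OF eq(3)] into by blast+
    then show "X = Y" using c d iff eq_equiv_class_iff[OF eq(1)] by blast
  qed
  moreover have "\<Phi> ` (P // R) = P1 // R1 \<times> P2 // R2"
  proof
    show "\<Phi> ` (P // R) \<subseteq> P1 // R1 \<times> P2 // R2"
    proof
      fix Z assume "Z \<in> \<Phi> ` (P // R)"
      then obtain c where "c \<in> P" "Z = \<Phi> (R `` {c})" by (auto elim!: quotientE)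
      then show "Z \<in> P1 // R1 \<times> P2 // R2" using \<Phi> into[of c] by (simp add: quotientI)
    qed
    show "P1 // R1 \<times> P2 // R2 \<subseteq> \<Phi> ` (P // R)"
    proof
      fix Z assume "Z \<in> P1 // R1 \<times> P2 // R2"
      then obtain c1 c2 where z: "c1 \<in> P1" "c2 \<in> P2" "Z = (R1 `` {c1}, R2 `` {c2})"
        by (auto elim!: quotientE)
      obtain c where c: "c \<in> P" "(r1 c, c1) \<in> R1" "(r2 c, c2) \<in> R2" using onto[OF z(1,2)] by blast
      then have "\<Phi> (R `` {c}) = Z"
        using \<Phi> z equiv_class_eq[OF eq(2)] equiv_class_eq[OF eq(3)] by simp
      then show "Z \<in> \<Phi> ` (P // R)" using quotientI[OF c(1)] by blast
    qed
  qed
  ultimately show ?thesis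
    using bij_betw_same_card[of \<Phi>] card_cartesian_product unfolding bij_betw_def by metis
qed

lemma kempe_equiv_lift_rtranclp:
  assumes lift: "\<And>c h. c \<in> proper_3ec C \<Longrightarrow> R (r c) h \<Longrightarrow>
      \<exists>c'. (c, c') \<in> kempe_equiv C \<and> r c' = h \<and> s c' = s c"
    and steps: "R\<^sup>*\<^sup>* (r c) h" and c: "c \<in> proper_3ec C"
  shows "\<exists>c'. (c, c') \<in> kempe_equiv C \<and> r c' = h \<and> s c' = s c"
  using steps
proof (induction rule: rtranclp_induct)
  case base
  then show ?case using kempe_equiv_refl[OF c] by blast
next
  case (step y z)
  then obtain c' where c': "(c, c') \<in> kempe_equiv C" "r c' = y" "s c' = s c" by blast
  moreover have "c' \<in> proper_3ec C" using kempe_equiv_proper[OF c'(1)] by blast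
  ultimately obtain c'' where "(c', c'') \<in> kempe_equiv C" "r c'' = z" "s c'' = s c'"
    using lift[of c' z] step.hyps(2) by blast
  then show ?case using c' kempe_equiv_trans by metis
qed

text \<open>The situation common to both compositions: r1 and r2 restrict colourings of C to the two
halves, and X1, X2 are the edges of the halves at the cut.\<close>
locale kempe_product =
  fixes C :: "('w, 'f) mgraph" and G1 :: "('v1, 'e1) mgraph" and G2 :: "('v2, 'e2) mgraph"
    and r1 :: "('f \<Rightarrow> nat) \<Rightarrow> 'e1 \<Rightarrow> nat" and r2 :: "('f \<Rightarrow> nat) \<Rightarrow> 'e2 \<Rightarrow> nat"
    and X1 :: "'e1 set" and X2 :: "'e2 set"
  assumes finite_edges: "finite (edges C)" "finite (edges G1)" "finite (edges G2)"
    and X1_adjacent: "\<And>e e'. e \<in> X1 \<Longrightarrow> e' \<in> X1 \<Longrightarrow> ends G1 e \<inter> ends G1 e' \<noteq> {}"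
    and X2_adjacent: "\<And>e e'. e \<in> X2 \<Longrightarrow> e' \<in> X2 \<Longrightarrow> ends G2 e \<inter> ends G2 e' \<noteq> {}"
    and restrict_proper: "\<And>c. c \<in> proper_3ec C \<Longrightarrow> r1 c \<in> proper_3ec G1 \<and> r2 c \<in> proper_3ec G2"
    and restrict_inj: "\<And>c c'. c \<in> proper_3ec C \<Longrightarrow> c' \<in> proper_3ec C \<Longrightarrow>
      r1 c = r1 c' \<Longrightarrow> r2 c = r2 c' \<Longrightarrow> c = c'"
    and restrict_kempe_step: "\<And>c c'. kempe_step C c c' \<Longrightarrow>
      (r1 c, r1 c') \<in> kempe_equiv G1 \<and> (r2 c, r2 c') \<in> kempe_equiv G2"
    and lift1: "\<And>c h. c \<in> proper_3ec C \<Longrightarrow> avoiding_switch G1 X1 (r1 c) h \<Longrightarrow>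
      \<exists>c'. (c, c') \<in> kempe_equiv C \<and> r1 c' = h \<and> r2 c' = r2 c"
    and lift2: "\<And>c h. c \<in> proper_3ec C \<Longrightarrow> avoiding_switch G2 X2 (r2 c) h \<Longrightarrow>
      \<exists>c'. (c, c') \<in> kempe_equiv C \<and> r2 c' = h \<and> r1 c' = r1 c"
    and restrict_permute_colours: "\<And>\<pi> c. \<pi> permutes {1,2,3} \<Longrightarrow> c \<in> proper_3ec C \<Longrightarrow>
      r1 (permute_colours C \<pi> c) = permute_colours G1 \<pi> (r1 c) \<and>
      r2 (permute_colours C \<pi> c) = permute_colours G2 \<pi> (r2 c)"
    and agree_permuted: "\<And>c c' \<pi>. c \<in> proper_3ec C \<Longrightarrow> c' \<in> proper_3ec C \<Longrightarrow> \<pi> permutes {1,2,3} \<Longrightarrow>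
      r2 c = r2 c' \<Longrightarrow> r1 c = permute_colours G1 \<pi> (r1 c') \<Longrightarrow> (avoiding_switch G1 X1)\<^sup>*\<^sup>* (r1 c) (r1 c')"
    and restrict_onto: "\<And>c1 c2. c1 \<in> proper_3ec G1 \<Longrightarrow> c2 \<in> proper_3ec G2 \<Longrightarrow>
      \<exists>c \<in> proper_3ec C. (r1 c, c1) \<in> kempe_equiv G1 \<and> (r2 c, c2) \<in> kempe_equiv G2"
begin

lemma restrict_kempe_equiv:
  assumes "(c, c') \<in> kempe_equiv C"
  shows "(r1 c, r1 c') \<in> kempe_equiv G1 \<and> (r2 c, r2 c') \<in> kempe_equiv G2"
proof -
  have c: "c \<in> proper_3ec C" and steps: "(kempe_step C)\<^sup>*\<^sup>* c c'"
    using assms unfolding kempe_equiv_def by auto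
  from steps show ?thesis
  proof (induction rule: rtranclp_induct)
    case base
    show ?case using restrict_proper[OF c] by (simp add: kempe_equiv_refl)
  next
    case (step y z)
    with restrict_kempe_step[OF step.hyps(2)] show ?case
      using kempe_equiv_trans[of "r1 c" "r1 y" G1 "r1 z"] kempe_equiv_trans[of "r2 c" "r2 y" G2 "r2 z"]
      by blast
  qed
qed

lemma lift1_rtranclp:
  "c \<in> proper_3ec C \<Longrightarrow> (avoiding_switch G1 X1)\<^sup>*\<^sup>* (r1 c) h \<Longrightarrow>
     \<exists>c'. (c, c') \<in> kempe_equiv C \<and> r1 c' = h \<and> r2 c' = r2 c"
  by (rule kempe_equiv_lift_rtranclp[OF lift1])

lemma lift2_rtranclp:
  "c \<in> proper_3ec C \<Longrightarrow> (avoiding_switch G2 X2)\<^sup>*\<^sup>* (r2 c) h \<Longrightarrow>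
     \<exists>c'. (c, c') \<in> kempe_equiv C \<and> r2 c' = h \<and> r1 c' = r1 c"
  by (rule kempe_equiv_lift_rtranclp[OF lift2])

text \<open>The second restriction only changes by a permutation of the colours.\<close>
lemma lift1_kempe_equiv:
  assumes c: "c \<in> proper_3ec C" and equiv: "(r1 c, h) \<in> kempe_equiv G1"
  shows "\<exists>c'. (c, c') \<in> kempe_equiv C \<and> r1 c' = h \<and> (r2 c, r2 c') \<in> kempe_equiv G2"
proof -
  obtain \<pi> where \<pi>: "\<pi> permutes {1,2,3}"
    and steps: "(avoiding_switch G1 X1)\<^sup>*\<^sup>* (permute_colours G1 \<pi> (r1 c)) h"
    using kempe_equiv_imp_avoiding_switches[OF X1_adjacent equiv] by blast
  define c0 where "c0 = permute_colours C \<pi> c"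
  have c0: "(c, c0) \<in> kempe_equiv C" unfolding c0_def
    by (rule kempe_equiv_permute_colours[OF finite_edges(1) c \<pi>])
  then obtain c' where c': "(c0, c') \<in> kempe_equiv C" "r1 c' = h" "r2 c' = r2 c0"
    using lift1_rtranclp[of c0 h] steps restrict_permute_colours[OF \<pi> c] kempe_equiv_proper
    unfolding c0_def by metis
  have "(r2 c, r2 c') \<in> kempe_equiv G2"
    using c'(3) restrict_permute_colours[OF \<pi> c] restrict_proper[OF c]
      kempe_equiv_permute_colours[OF finite_edges(3) _ \<pi>] unfolding c0_def by metis
  then show ?thesis using c0 c' kempe_equiv_trans by metis
qed

text \<open>First move the first restriction to r1 c', then the second one to r2 c' at the price of a
colour permutation of the first one, which is undone by switches avoiding the cut.\<close>
lemma kempe_equiv_if_restrict_kempe_equiv: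
  assumes c: "c \<in> proper_3ec C" and c': "c' \<in> proper_3ec C"
    and equiv1: "(r1 c, r1 c') \<in> kempe_equiv G1" and equiv2: "(r2 c, r2 c') \<in> kempe_equiv G2"
  shows "(c, c') \<in> kempe_equiv C"
proof -
  obtain c1 where c1: "(c, c1) \<in> kempe_equiv C" "r1 c1 = r1 c'" "(r2 c, r2 c1) \<in> kempe_equiv G2"
    using lift1_kempe_equiv[OF c equiv1] by blast
  have c1p: "c1 \<in> proper_3ec C" using kempe_equiv_proper[OF c1(1)] by blast
  have "(r2 c1, r2 c') \<in> kempe_equiv G2"
    using kempe_equiv_trans[OF kempe_equiv_sym[OF c1(3)] equiv2] .
  obtain \<pi> where \<pi>: "\<pi> permutes {1,2,3}"
    and steps: "(avoiding_switch G2 X2)\<^sup>*\<^sup>* (permute_colours G2 \<pi> (r2 c1)) (r2 c')"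
    using kempe_equiv_imp_avoiding_switches[OF X2_adjacent \<open>(r2 c1, r2 c') \<in> kempe_equiv G2\<close>] by blast
  define c2 where "c2 = permute_colours C \<pi> c1"
  have c2: "(c1, c2) \<in> kempe_equiv C" unfolding c2_def
    by (rule kempe_equiv_permute_colours[OF finite_edges(1) c1p \<pi>])
  obtain c3 where c3: "(c2, c3) \<in> kempe_equiv C" "r2 c3 = r2 c'" "r1 c3 = r1 c2"
    using lift2_rtranclp[of c2] steps restrict_permute_colours[OF \<pi> c1p] kempe_equiv_proper[OF c2]
    unfolding c2_def by metis
  have c3p: "c3 \<in> proper_3ec C" using kempe_equiv_proper[OF c3(1)] by blast
  have "r1 c3 = permute_colours G1 \<pi> (r1 c')"
    using c3(3) restrict_permute_colours[OF \<pi> c1p] c1(2) unfolding c2_def by simp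
  then have "(avoiding_switch G1 X1)\<^sup>*\<^sup>* (r1 c3) (r1 c')"
    using agree_permuted[OF c3p c' \<pi> c3(2)] by blast
  then obtain c4 where c4: "(c3, c4) \<in> kempe_equiv C" "r1 c4 = r1 c'" "r2 c4 = r2 c3"
    using lift1_rtranclp[OF c3p] by blast
  then have "c4 = c'" using restrict_inj[OF _ c'] kempe_equiv_proper c3(2) by metis
  then show ?thesis using c1(1) c2 c3(1) c4(1) kempe_equiv_trans by metis
qed

theorem K3_eq_mult: "K3 C = K3 G1 * K3 G2"
  unfolding K3_def
proof (rule card_quotient_eq_mult[OF equiv_kempe_equiv equiv_kempe_equiv equiv_kempe_equiv])
  show "c \<in> proper_3ec C \<Longrightarrow> r1 c \<in> proper_3ec G1 \<and> r2 c \<in> proper_3ec G2" for c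
    by (rule restrict_proper)
  show "c \<in> proper_3ec C \<Longrightarrow> c' \<in> proper_3ec C \<Longrightarrow>
      (c, c') \<in> kempe_equiv C \<longleftrightarrow> (r1 c, r1 c') \<in> kempe_equiv G1 \<and> (r2 c, r2 c') \<in> kempe_equiv G2"
    for c c'
    using restrict_kempe_equiv kempe_equiv_if_restrict_kempe_equiv by blast
qed (rule restrict_onto)

end

subsection \<open>One half of a Y-composition\<close>

text \<open>The vertex v of G is deleted in C; \<psi> embeds the edges of G (those at v become the
edges crossing the cut) and emb the remaining vertices.\<close>
locale Y_side =
  fixes G :: "('v, 'e) mgraph" and C :: "('w, 'f) mgraph" and v :: 'v
    and \<psi> :: "'e \<Rightarrow> 'f" and emb :: "'v \<Rightarrow> 'w"
  assumes cubic: "cubic G" and v: "v \<in> verts G"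
    and inj_\<psi>: "inj_on \<psi> (edges G)" and \<psi>_edges: "\<And>e. e \<in> edges G \<Longrightarrow> \<psi> e \<in> edges C"
    and inc_emb: "\<And>u. u \<in> verts G \<Longrightarrow> u \<noteq> v \<Longrightarrow> inc C (emb u) = \<psi> ` inc G u"
    and ends_\<psi>: "\<And>e. e \<in> edges G \<Longrightarrow> e \<notin> inc G v \<Longrightarrow> ends C (\<psi> e) = emb ` ends G e"
begin

definition restrict :: "('f \<Rightarrow> nat) \<Rightarrow> 'e \<Rightarrow> nat" where
  "restrict c = (\<lambda>e. if e \<in> edges G then c (\<psi> e) else undefined)"

lemma restrict_colour: "c \<in> proper_3ec C \<Longrightarrow> e \<in> edges G \<Longrightarrow> restrict c e \<in> {1,2,3}"
  unfolding restrict_def using proper_3ec_colour[OF _ \<psi>_edges] by simp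

lemma card_inc_emb: "u \<in> verts G \<Longrightarrow> u \<noteq> v \<Longrightarrow> card (inc C (emb u)) = 3"
  using inc_emb card_image[OF inj_on_subset[OF inj_\<psi> inc_subset_edges]] cubic_card_inc[OF cubic]
  by metis

lemma restrict_inj_on_inc:
  assumes c: "c \<in> proper_3ec C" and u: "u \<in> verts G" "u \<noteq> v"
  shows "inj_on (restrict c) (inc G u)"
proof -
  have "inj_on (c \<circ> \<psi>) (inc G u)"
    using comp_inj_on[OF inj_on_subset[OF inj_\<psi> inc_subset_edges]] proper_3ec_inj_on_inc[OF c]
      inc_emb[OF u] by metis
  moreover have "inj_on (c \<circ> \<psi>) (inc G u) = inj_on (restrict c) (inc G u)"
    by (rule inj_on_cong) (simp add: restrict_def inc_iff)
  ultimately show ?thesis by simp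
qed

text \<open>The parity lemma: each colour class of the restriction covers every vertex other
than v exactly once, so its size forces the three edges at v to have the same parity of
occurrences of each colour; as they are three, each colour occurs exactly once at v.\<close>
lemma restrict_inj_on_inc_v:
  assumes c: "c \<in> proper_3ec C"
  shows "inj_on (restrict c) (inc G v)"
proof -
  define n where "n i = card {e \<in> inc G v. restrict c e = i}" for i
  have even: "even (card (verts G - {v}) + n i)" if i: "i \<in> {1,2,3}" for i
  proof -
    define F where "F = {e \<in> edges G. restrict c e = i}"
    have "card (inc G u \<inter> F) = 1" if u: "u \<in> verts G - {v}" for u
    proof -
      have "restrict c ` inc G u \<subseteq> {1,2,3}" using restrict_colour[OF c] unfolding inc_def by blast
      then have "bij_betw (restrict c) (inc G u) {1,2,3}"
        using bij_betw_colours[OF cubic_card_inc[OF cubic] restrict_inj_on_inc[OF c]] u by simp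
      moreover have "inc G u \<inter> F = {e \<in> inc G u. restrict c e \<in> {i}}" unfolding F_def inc_def by auto
      ultimately show ?thesis using card_colour_class[of "restrict c" "inc G u" "{1,2,3}" "{i}"] i by simp
    qed
    moreover have "inc G v \<inter> F = {e \<in> inc G v. restrict c e = i}" unfolding F_def inc_def by auto
    ultimately have "2 * card F = card (verts G - {v}) + n i"
      using handshake_vertex[OF cubic_wf[OF cubic] _ v, of F] unfolding F_def n_def by simp
    then show ?thesis by (metis dvd_triv_left)
  qed
  have "(\<Sum>i\<in>{1,2,3}. n i) = card (inc G v)"
    using sum.group[OF finite_inc[OF cubic, of v], where T="{1,2,3}" and g="restrict c"
        and h="\<lambda>_. 1::nat"] restrict_colour[OF c]
    unfolding n_def by (simp add: inc_iff image_subset_iff)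
  then have "n 1 + n 2 + n 3 = 3" using cubic_card_inc[OF cubic v] by simp
  then have ones: "n i = 1" if "i \<in> {1,2,3}" for i
    using three_ones_of_same_parity[OF even[of 1] even[of 2] even[of 3]] that by auto
  show ?thesis
  proof (rule inj_onI)
    fix e e' assume e: "e \<in> inc G v" "e' \<in> inc G v" and eq: "restrict c e = restrict c e'"
    have "restrict c e \<in> {1,2,3}" using restrict_colour[OF c] e(1) unfolding inc_def by blast
    then have "card {x \<in> inc G v. restrict c x = restrict c e} = 1" using ones unfolding n_def by blast
    moreover have "e \<in> {x \<in> inc G v. restrict c x = restrict c e}"
      "e' \<in> {x \<in> inc G v. restrict c x = restrict c e}" using e eq by auto
    ultimately show "e = e'" by (metis card_1_singletonE singletonD)
  qed
qed

lemma restrict_proper: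
  assumes c: "c \<in> proper_3ec C" shows "restrict c \<in> proper_3ec G"
proof (rule proper_3ecI_inj_on_inc)
  show "inj_on (restrict c) (inc G u)" for u
  proof (cases "u \<in> verts G")
    case True
    then show ?thesis using restrict_inj_on_inc_v[OF c] restrict_inj_on_inc[OF c] by (cases "u = v") auto
  next
    case False
    then have "inc G u = {}" using cubic_ends_subset[OF cubic] unfolding inc_def by blast
    then show ?thesis by simp
  qed
qed (use proper_3ec_colour[OF c \<psi>_edges] in \<open>auto simp: restrict_def\<close>)

lemma restrict_kempe_switch:
  "restrict (kempe_switch c a b K) = kempe_switch (restrict c) a b {e \<in> edges G. \<psi> e \<in> K}"
  unfolding restrict_def kempe_switch_def by auto

lemma even_card_inc_v_Int_preimage:
  assumes c: "c \<in> proper_3ec C" and K: "kempe_closed C c a b K"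
    and ab: "a \<in> {1,2,3}" "b \<in> {1,2,3}" "a \<noteq> b"
  shows "even (card (inc G v \<inter> {e \<in> edges G. \<psi> e \<in> K}))"
proof -
  define S where "S = {e \<in> edges G. \<psi> e \<in> K}"
  have "even (card (inc G u \<inter> S))" if u: "u \<in> verts G - {v}" for u
  proof -
    have "\<psi> ` (inc G u \<inter> S) = inc C (emb u) \<inter> K" using inc_emb u unfolding S_def inc_def by auto
    moreover have "inc G u \<inter> S \<subseteq> edges G" unfolding S_def by blast
    ultimately have "card (inc G u \<inter> S) = card (inc C (emb u) \<inter> K)"
      using card_image[OF inj_on_subset[OF inj_\<psi>]] by metis
    then show ?thesis using even_card_inc_Int_kempe_closed[OF c K ab card_inc_emb] u by simp
  qed
  then have "even (\<Sum>u\<in>verts G - {v}. card (inc G u \<inter> S))" by (intro dvd_sum) blast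
  moreover have "2 * card S = (\<Sum>u\<in>verts G - {v}. card (inc G u \<inter> S)) + card (inc G v \<inter> S)"
    by (rule handshake_vertex[OF cubic_wf[OF cubic] _ v]) (auto simp: S_def)
  ultimately show ?thesis unfolding S_def by presburger
qed

lemma kempe_closed_preimage:
  assumes c: "c \<in> proper_3ec C" and K: "kempe_closed C c a b K"
    and ab: "a \<in> {1,2,3}" "b \<in> {1,2,3}" "a \<noteq> b"
  shows "kempe_closed G (restrict c) a b {e \<in> edges G. \<psi> e \<in> K}"
  unfolding kempe_closed_def
proof (intro conjI allI impI)
  define S where "S = {e \<in> edges G. \<psi> e \<in> K}"
  show "S \<subseteq> {e \<in> edges G. restrict c e \<in> {a, b}}"
    unfolding S_def restrict_def using kempe_closedD[OF K] by auto
  fix e e' assume eS: "e \<in> S" and adj: "ab_adj G (restrict c) a b e e'"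
  then have E: "e \<in> edges G" "e' \<in> edges G" "restrict c e' \<in> {a,b}" "ends G e \<inter> ends G e' \<noteq> {}"
    unfolding ab_adj_def by auto
  show "e' \<in> S"
  proof (cases "\<exists>u \<in> ends G e \<inter> ends G e'. u \<noteq> v")
    case True
    then obtain u where u: "u \<in> ends G e" "u \<in> ends G e'" "u \<noteq> v" by blast
    then have "\<psi> e \<in> inc C (emb u)" "\<psi> e' \<in> inc C (emb u)"
      using inc_emb[of u] cubic_ends_subset[OF cubic E(1)] E unfolding inc_def by auto
    then have "ab_adj C c a b (\<psi> e) (\<psi> e')"
      using eS E kempe_closedD[OF K] unfolding ab_adj_def inc_def S_def restrict_def by auto
    then show ?thesis using K eS E unfolding kempe_closed_def S_def by blast
  next
    case False
    txt \<open>Both edges are at v; the closed set contains an even, nonzero number of the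
      two edges of colour a or b there, hence both.\<close>
    then have at_v: "e \<in> inc G v" "e' \<in> inc G v" using E by (auto simp: inc_def)
    define AB where "AB = {e \<in> inc G v. restrict c e \<in> {a,b}}"
    have "card AB = 2"
      using card_colour_class[OF proper_3ec_bij_betw_inc[OF restrict_proper[OF c]
            cubic_card_inc[OF cubic v]], of "{a,b}"] ab unfolding AB_def by simp
    then have finAB: "finite AB" by (simp add: card_ge_0_finite)
    have sub: "inc G v \<inter> S \<subseteq> AB"
      unfolding AB_def S_def restrict_def using kempe_closedD[OF K] by (auto simp: inc_iff)
    have "inc G v \<inter> S \<noteq> {}" using at_v eS by blast
    then have "card (inc G v \<inter> S) \<noteq> 0" using finite_subset[OF sub finAB] by simp
    moreover have "card (inc G v \<inter> S) \<le> 2" using card_mono[OF finAB sub] \<open>card AB = 2\<close> by simp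
    moreover have "even (card (inc G v \<inter> S))"
      using even_card_inc_v_Int_preimage[OF c K ab] unfolding S_def .
    ultimately have "card (inc G v \<inter> S) = card AB" using \<open>card AB = 2\<close> by presburger
    then have "inc G v \<inter> S = AB" using card_subset_eq[OF finAB sub] by simp
    then show ?thesis using at_v E unfolding AB_def by blast
  qed
qed

lemma restrict_kempe_step:
  assumes "kempe_step C c c'" shows "(restrict c, restrict c') \<in> kempe_equiv G"
proof -
  obtain a b K where c: "c \<in> proper_3ec C" and ab: "a \<in> {1,2,3}" "b \<in> {1,2,3}" "a \<noteq> b"
    and K: "kempe_chain C c a b K" and c': "c' = kempe_switch c a b K"
    using assms unfolding kempe_step_def by blast
  show ?thesis
    using kempe_equiv_kempe_switch[OF cubic_finite_edges[OF cubic] restrict_proper[OF c]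
        kempe_closed_preimage[OF c kempe_chain_closed[OF K] ab] ab]
    unfolding c' restrict_kempe_switch .
qed

lemma kempe_closed_image:
  assumes c: "c \<in> proper_3ec C" and S: "kempe_closed G (restrict c) a b S" "S \<inter> inc G v = {}"
  shows "kempe_closed C c a b (\<psi> ` S)"
  unfolding kempe_closed_def
proof (intro conjI allI impI)
  show "\<psi> ` S \<subseteq> {e \<in> edges C. c e \<in> {a, b}}"
  proof
    fix z assume "z \<in> \<psi> ` S"
    then obtain e where "e \<in> S" "z = \<psi> e" by blast
    then show "z \<in> {e \<in> edges C. c e \<in> {a, b}}"
      using kempe_closedD[OF S(1)] \<psi>_edges unfolding restrict_def by force
  qed
  fix z z' assume "z \<in> \<psi> ` S" and adj: "ab_adj C c a b z z'"
  then obtain e where e: "e \<in> S" "z = \<psi> e" by blast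
  have E: "e \<in> edges G" "e \<notin> inc G v" using e S kempe_closedD[OF S(1)] by auto
  obtain u where u: "u \<in> ends G e" "emb u \<in> ends C z'"
    using adj ends_\<psi>[OF E] e unfolding ab_adj_def by auto
  have "u \<in> verts G" "u \<noteq> v" using cubic_ends_subset[OF cubic E(1)] u E unfolding inc_def by auto
  moreover have "z' \<in> inc C (emb u)" using adj u unfolding ab_adj_def inc_def by blast
  ultimately obtain e' where e': "e' \<in> inc G u" "z' = \<psi> e'" using inc_emb by blast
  have "ab_adj G (restrict c) a b e e'"
    using e e' E u adj kempe_closedD[OF S(1) e(1)] unfolding ab_adj_def restrict_def inc_def by auto
  then show "z' \<in> \<psi> ` S" using S(1) e e' unfolding kempe_closed_def by blast
qed

lemma restrict_kempe_switch_image: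
  assumes "S \<subseteq> edges G"
  shows "restrict (kempe_switch c a b (\<psi> ` S)) = kempe_switch (restrict c) a b S"
proof -
  have "{e \<in> edges G. \<psi> e \<in> \<psi> ` S} = S" using assms inj_\<psi> unfolding inj_on_def by blast
  then show ?thesis using restrict_kempe_switch by metis
qed

lemma restrict_permute_colours: "restrict (permute_colours C \<pi> c) = permute_colours G \<pi> (restrict c)"
  unfolding restrict_def permute_colours_def using \<psi>_edges by auto

lemma restrict_kempe_switch_disjoint:
  "(\<And>e. e \<in> edges G \<Longrightarrow> \<psi> e \<notin> T) \<Longrightarrow> restrict (kempe_switch c a b T) = restrict c"
  unfolding restrict_def kempe_switch_def by auto

lemma restrict_eqI:
  "c1 \<in> proper_3ec G \<Longrightarrow> (\<And>e. e \<in> edges G \<Longrightarrow> c (\<psi> e) = c1 e) \<Longrightarrow> restrict c = c1"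
  unfolding restrict_def using proper_3ec_undefined by fastforce

lemma inj_on_inc_emb:
  assumes c1: "c1 \<in> proper_3ec G" and eq: "\<And>e. e \<in> edges G \<Longrightarrow> c (\<psi> e) = c1 e"
    and u: "u \<in> verts G" "u \<noteq> v"
  shows "inj_on c (inc C (emb u))"
proof -
  have "inj_on (c \<circ> \<psi>) (inc G u) = inj_on c1 (inc G u)"
    by (rule inj_on_cong) (simp add: eq inc_iff)
  then have "inj_on (c \<circ> \<psi>) (inc G u)" using proper_3ec_inj_on_inc[OF c1] by simp
  then show ?thesis unfolding inc_emb[OF u] by (rule inj_on_imageI)
qed

end

subsection \<open>One half of an H-composition\<close>

text \<open>The edge d = xy of G is deleted in C; \<psi> embeds the other edges and \<kappa> x, \<kappa> y are the
edges of C crossing the cut at x and y.\<close>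
locale H_side =
  fixes G :: "('v, 'e) mgraph" and C :: "('w, 'f) mgraph" and d :: 'e and x :: 'v and y :: 'v
    and \<psi> :: "'e \<Rightarrow> 'f" and \<kappa> :: "'v \<Rightarrow> 'f" and emb :: "'v \<Rightarrow> 'w"
  assumes cubic: "cubic G" and d: "d \<in> edges G" and ends_d: "ends G d = {x, y}" and x_neq_y: "x \<noteq> y"
    and inj_\<psi>: "inj_on \<psi> (edges G - {d})" and \<psi>_edges: "\<And>e. e \<in> edges G - {d} \<Longrightarrow> \<psi> e \<in> edges C"
    and \<kappa>_edges: "\<And>u. u \<in> ends G d \<Longrightarrow> \<kappa> u \<in> edges C"
    and \<psi>_neq_\<kappa>: "\<And>e u. e \<in> edges G - {d} \<Longrightarrow> \<psi> e \<noteq> \<kappa> u"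
    and inc_emb: "\<And>u. u \<in> verts G \<Longrightarrow>
      inc C (emb u) = \<psi> ` (inc G u - {d}) \<union> (if u \<in> ends G d then {\<kappa> u} else {})"
    and ends_\<psi>: "\<And>e. e \<in> edges G - {d} \<Longrightarrow> ends C (\<psi> e) = emb ` ends G e"
begin

definition lift_edge :: "'v \<Rightarrow> 'e \<Rightarrow> 'f" where
  "lift_edge u e = (if e = d then \<kappa> u else \<psi> e)"

definition restrict :: "('f \<Rightarrow> nat) \<Rightarrow> 'e \<Rightarrow> nat" where
  "restrict c = (\<lambda>e. if e = d then c (\<kappa> x) else if e \<in> edges G then c (\<psi> e) else undefined)"

lemma ends_d_verts: "x \<in> verts G" "y \<in> verts G"
  using cubic_ends_subset[OF cubic d] ends_d by auto

lemma inc_emb_lift_edge: "u \<in> verts G \<Longrightarrow> inc C (emb u) = lift_edge u ` inc G u"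
  using inc_emb[of u] d by (auto simp: lift_edge_def inc_iff image_iff)

lemma inj_on_lift_edge: "inj_on (lift_edge u) (inc G u)"
proof (rule inj_onI)
  fix e e' assume "e \<in> inc G u" "e' \<in> inc G u" "lift_edge u e = lift_edge u e'"
  then show "e = e'" using inj_\<psi> \<psi>_neq_\<kappa>[of e u] \<psi>_neq_\<kappa>[of e' u]
    unfolding lift_edge_def inj_on_def inc_iff by (auto split: if_splits)
qed

lemma card_inc_emb: "u \<in> verts G \<Longrightarrow> card (inc C (emb u)) = 3"
  using inc_emb_lift_edge card_image[OF inj_on_lift_edge] cubic_card_inc[OF cubic] by metis

lemma sum_card_inc_emb_Int:
  "(\<Sum>u\<in>verts G. card (inc C (emb u) \<inter> K)) = 2 * card {e \<in> edges G - {d}. \<psi> e \<in> K}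
     + (if \<kappa> x \<in> K then 1 else 0) + (if \<kappa> y \<in> K then 1 else 0)"
proof -
  define S where "S = {e \<in> edges G - {d}. \<psi> e \<in> K}"
  define \<delta> :: "'v \<Rightarrow> nat" where "\<delta> u = (if u \<in> {x,y} \<and> \<kappa> u \<in> K then 1 else 0)" for u
  have "card (inc C (emb u) \<inter> K) = card (inc G u \<inter> S) + \<delta> u" if u: "u \<in> verts G" for u
  proof -
    have "inc C (emb u) \<inter> K = lift_edge u ` (inc G u \<inter> S \<union> (if \<delta> u = 1 then {d} else {}))"
      using inc_emb_lift_edge[OF u] d ends_d
      by (auto simp: S_def \<delta>_def lift_edge_def inc_iff image_iff split: if_splits)
    moreover have "inc G u \<inter> S \<union> (if \<delta> u = 1 then {d} else {}) \<subseteq> inc G u"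
      using d ends_d by (auto simp: S_def \<delta>_def inc_iff)
    ultimately have "card (inc C (emb u) \<inter> K) = card (inc G u \<inter> S \<union> (if \<delta> u = 1 then {d} else {}))"
      using card_image[OF inj_on_subset[OF inj_on_lift_edge]] by metis
    moreover have "finite (inc G u \<inter> S)" using finite_inc[OF cubic] by blast
    ultimately show ?thesis by (simp add: \<delta>_def S_def)
  qed
  then have "(\<Sum>u\<in>verts G. card (inc C (emb u) \<inter> K)) = (\<Sum>u\<in>verts G. card (inc G u \<inter> S)) + sum \<delta> (verts G)"
    by (simp add: sum.distrib)
  also have "(\<Sum>u\<in>verts G. card (inc G u \<inter> S)) = 2 * card S"
    by (rule handshake[OF cubic_wf[OF cubic], symmetric]) (auto simp: S_def)
  also have "sum \<delta> (verts G) = sum \<delta> {x, y}"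
    by (rule sum.mono_neutral_right) (use cubic_finite_verts[OF cubic] ends_d_verts in \<open>auto simp: \<delta>_def\<close>)
  finally show ?thesis using x_neq_y by (simp add: S_def \<delta>_def)
qed

text \<open>The colour class of the cut edge at x meets every vertex once; since the number of
vertices is even, it must contain the cut edge at y as well.\<close>
lemma \<kappa>_same_colour:
  assumes c: "c \<in> proper_3ec C" shows "c (\<kappa> y) = c (\<kappa> x)"
proof (rule ccontr)
  assume ne: "c (\<kappa> y) \<noteq> c (\<kappa> x)"
  define K where "K = {z. c z = c (\<kappa> x)}"
  have "card (inc C (emb u) \<inter> K) = 1" if u: "u \<in> verts G" for u
  proof -
    have "inc C (emb u) \<inter> K = {z \<in> inc C (emb u). c z \<in> {c (\<kappa> x)}}" unfolding K_def by auto
    moreover have "c (\<kappa> x) \<in> {1,2,3}" using proper_3ec_colour[OF c \<kappa>_edges] ends_d by blast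
    ultimately show ?thesis
      using card_colour_class[OF proper_3ec_bij_betw_inc[OF c card_inc_emb[OF u]], of "{c (\<kappa> x)}"] by simp
  qed
  then have "card (verts G) = 2 * card {e \<in> edges G - {d}. \<psi> e \<in> K} + 1"
    using sum_card_inc_emb_Int[of K] ne unfolding K_def by simp
  then show False using cubic_even_card_verts[OF cubic] by presburger
qed

lemma restrict_lift_edge:
  assumes c: "c \<in> proper_3ec C" and e: "e \<in> inc G u"
  shows "restrict c e = c (lift_edge u e)"
  using e ends_d \<kappa>_same_colour[OF c] unfolding restrict_def lift_edge_def inc_def by auto

lemma restrict_d: "c \<in> proper_3ec C \<Longrightarrow> u \<in> ends G d \<Longrightarrow> restrict c d = c (\<kappa> u)"
  using restrict_lift_edge[of c d u] d unfolding inc_def lift_edge_def by simp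

lemma restrict_proper:
  assumes c: "c \<in> proper_3ec C" shows "restrict c \<in> proper_3ec G"
proof (rule proper_3ecI_inj_on_inc)
  show "inj_on (restrict c) (inc G u)" for u
  proof (cases "u \<in> verts G")
    case True
    have "inj_on (c \<circ> lift_edge u) (inc G u)"
      using comp_inj_on[OF inj_on_lift_edge] proper_3ec_inj_on_inc[OF c] inc_emb_lift_edge[OF True] by metis
    moreover have "inj_on (c \<circ> lift_edge u) (inc G u) = inj_on (restrict c) (inc G u)"
      by (rule inj_on_cong) (simp add: restrict_lift_edge[OF c])
    ultimately show ?thesis by simp
  next
    case False
    then have "inc G u = {}" using cubic_ends_subset[OF cubic] unfolding inc_def by blast
    then show ?thesis by simp
  qed
  show "e \<in> edges G \<Longrightarrow> restrict c e \<in> {1,2,3}" for e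
    using proper_3ec_colour[OF c] \<psi>_edges \<kappa>_edges ends_d unfolding restrict_def by auto
qed (auto simp: restrict_def d)

lemma restrict_kempe_switch:
  assumes "\<kappa> x \<in> K \<longleftrightarrow> \<kappa> y \<in> K"
  shows "restrict (kempe_switch c a b K) = kempe_switch (restrict c) a b
      ({e \<in> edges G - {d}. \<psi> e \<in> K} \<union> (if \<kappa> x \<in> K then {d} else {}))"
  unfolding restrict_def kempe_switch_def using d by (auto simp: fun_eq_iff)

lemma \<kappa>_mem_kempe_closed_iff:
  assumes c: "c \<in> proper_3ec C" and K: "kempe_closed C c a b K"
    and ab: "a \<in> {1,2,3}" "b \<in> {1,2,3}" "a \<noteq> b"
  shows "\<kappa> x \<in> K \<longleftrightarrow> \<kappa> y \<in> K"
proof -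
  have "even (\<Sum>u\<in>verts G. card (inc C (emb u) \<inter> K))"
    using even_card_inc_Int_kempe_closed[OF c K ab card_inc_emb] by (intro dvd_sum) blast
  then show ?thesis unfolding sum_card_inc_emb_Int by (auto split: if_splits)
qed

lemma kempe_closed_preimage:
  assumes c: "c \<in> proper_3ec C" and K: "kempe_closed C c a b K"
    and ab: "a \<in> {1,2,3}" "b \<in> {1,2,3}" "a \<noteq> b"
  shows "kempe_closed G (restrict c) a b
      ({e \<in> edges G - {d}. \<psi> e \<in> K} \<union> (if \<kappa> x \<in> K then {d} else {}))" (is "kempe_closed G _ a b ?S")
proof -
  have mem: "e \<in> ?S \<longleftrightarrow> lift_edge u e \<in> K" if e: "e \<in> inc G u" for e u
  proof (cases "e = d")
    case True
    then have "u = x \<or> u = y" using e ends_d unfolding inc_def by blast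
    then show ?thesis using True \<kappa>_mem_kempe_closed_iff[OF c K ab] unfolding lift_edge_def by auto
  next
    case False
    then show ?thesis using e unfolding lift_edge_def inc_def by simp
  qed
  show ?thesis
    unfolding kempe_closed_def
  proof (intro conjI allI impI)
    show "?S \<subseteq> {e \<in> edges G. restrict c e \<in> {a, b}}"
      using kempe_closedD[OF K] d unfolding restrict_def by (auto split: if_splits)
    fix e e' assume eS: "e \<in> ?S" and adj: "ab_adj G (restrict c) a b e e'"
    from adj obtain u where u: "e \<in> inc G u" "e' \<in> inc G u" unfolding ab_adj_def inc_def by blast
    then have "u \<in> verts G" using cubic_ends_subset[OF cubic] unfolding inc_def by blast
    then have in_C: "lift_edge u e \<in> inc C (emb u)" "lift_edge u e' \<in> inc C (emb u)"
      using inc_emb_lift_edge u by auto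
    have "c (lift_edge u e) \<in> {a,b}" "c (lift_edge u e') \<in> {a,b}"
      using adj restrict_lift_edge[OF c u(1)] restrict_lift_edge[OF c u(2)] unfolding ab_adj_def by auto
    then have "ab_adj C c a b (lift_edge u e) (lift_edge u e')" using in_C unfolding ab_adj_def inc_def by blast
    moreover have "lift_edge u e \<in> K" using mem[OF u(1)] eS by blast
    ultimately have "lift_edge u e' \<in> K" using K unfolding kempe_closed_def by blast
    then show "e' \<in> ?S" using mem[OF u(2)] by blast
  qed
qed

lemma restrict_kempe_step:
  assumes "kempe_step C c c'" shows "(restrict c, restrict c') \<in> kempe_equiv G"
proof -
  obtain a b K where c: "c \<in> proper_3ec C" and ab: "a \<in> {1,2,3}" "b \<in> {1,2,3}" "a \<noteq> b"
    and K: "kempe_chain C c a b K" and c': "c' = kempe_switch c a b K"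
    using assms unfolding kempe_step_def by blast
  note closed = kempe_chain_closed[OF K]
  show ?thesis
    using kempe_equiv_kempe_switch[OF cubic_finite_edges[OF cubic] restrict_proper[OF c]
        kempe_closed_preimage[OF c closed ab] ab]
    unfolding c' restrict_kempe_switch[OF \<kappa>_mem_kempe_closed_iff[OF c closed ab]] .
qed

lemma kempe_closed_image:
  assumes c: "c \<in> proper_3ec C" and S: "kempe_closed G (restrict c) a b S" "d \<notin> S"
  shows "kempe_closed C c a b (\<psi> ` S)"
  unfolding kempe_closed_def
proof (intro conjI allI impI)
  have S_colour: "e \<in> edges G - {d} \<and> c (\<psi> e) \<in> {a,b}" if "e \<in> S" for e
    using kempe_closedD[OF S(1) that] S(2) that unfolding restrict_def by (auto split: if_splits)
  then show "\<psi> ` S \<subseteq> {e \<in> edges C. c e \<in> {a, b}}" using \<psi>_edges by blast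
  fix z z' assume "z \<in> \<psi> ` S" and adj: "ab_adj C c a b z z'"
  then obtain e where e: "e \<in> S" "z = \<psi> e" by blast
  have E: "e \<in> edges G - {d}" using S_colour[OF e(1)] by blast
  obtain u where u: "u \<in> ends G e" "emb u \<in> ends C z'"
    using adj ends_\<psi>[OF E] e unfolding ab_adj_def by auto
  have "u \<in> verts G" using cubic_ends_subset[OF cubic] E u by blast
  moreover have "z' \<in> inc C (emb u)" using adj u unfolding ab_adj_def inc_def by blast
  ultimately obtain e' where e': "e' \<in> inc G u" "z' = lift_edge u e'" using inc_emb_lift_edge by blast
  have "restrict c e' \<in> {a,b}" using restrict_lift_edge[OF c e'(1)] e'(2) adj unfolding ab_adj_def by simp
  then have "ab_adj G (restrict c) a b e e'"
    using kempe_closedD[OF S(1) e(1)] e'(1) u(1) unfolding ab_adj_def inc_def by blast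
  then have "e' \<in> S" using S(1) e unfolding kempe_closed_def by blast
  then show "z' \<in> \<psi> ` S" using e' S(2) unfolding lift_edge_def by auto
qed

lemma restrict_kempe_switch_image:
  assumes S: "S \<subseteq> edges G - {d}"
  shows "restrict (kempe_switch c a b (\<psi> ` S)) = kempe_switch (restrict c) a b S"
proof -
  have "\<kappa> u \<notin> \<psi> ` S" for u
  proof
    assume "\<kappa> u \<in> \<psi> ` S"
    then obtain e where "e \<in> S" "\<kappa> u = \<psi> e" by blast
    then show False using S \<psi>_neq_\<kappa>[of e u] by auto
  qed
  moreover have "{e \<in> edges G - {d}. \<psi> e \<in> \<psi> ` S} = S"
    using S inj_on_image_mem_iff[OF inj_\<psi>] by auto
  ultimately show ?thesis using restrict_kempe_switch[of "\<psi> ` S" c a b] by simp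
qed

lemma restrict_permute_colours: "restrict (permute_colours C \<pi> c) = permute_colours G \<pi> (restrict c)"
  unfolding restrict_def permute_colours_def using \<psi>_edges \<kappa>_edges ends_d d by auto

lemma restrict_kempe_switch_disjoint:
  "(\<And>e. e \<in> edges G - {d} \<Longrightarrow> \<psi> e \<notin> T) \<Longrightarrow> \<kappa> x \<notin> T \<Longrightarrow> restrict (kempe_switch c a b T) = restrict c"
  unfolding restrict_def kempe_switch_def by auto

lemma restrict_eqI:
  "c1 \<in> proper_3ec G \<Longrightarrow> c (\<kappa> x) = c1 d \<Longrightarrow> (\<And>e. e \<in> edges G - {d} \<Longrightarrow> c (\<psi> e) = c1 e) \<Longrightarrow>
     restrict c = c1"
  unfolding restrict_def using proper_3ec_undefined d by fastforce

lemma inj_on_inc_emb: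
  assumes c1: "c1 \<in> proper_3ec G" and eq: "\<And>e. e \<in> inc G u \<Longrightarrow> c (lift_edge u e) = c1 e"
    and u: "u \<in> verts G"
  shows "inj_on c (inc C (emb u))"
proof -
  have "inj_on (c \<circ> lift_edge u) (inc G u) = inj_on c1 (inc G u)"
    by (rule inj_on_cong) (simp add: eq)
  then have "inj_on (c \<circ> lift_edge u) (inc G u)" using proper_3ec_inj_on_inc[OF c1] by simp
  then show ?thesis unfolding inc_emb_lift_edge[OF u] by (rule inj_on_imageI)
qed

end

subsection \<open>Y-compositions\<close>

text \<open>The edges of G1 and G2 inside the Y-composition; an edge e at v1 and the edge f e at v2
are glued into the single edge (e, f e).\<close>
definition Y_edge1 :: "('v1, 'e1) mgraph \<Rightarrow> 'v1 \<Rightarrow> ('e1 \<Rightarrow> 'e2) \<Rightarrow> 'e1 \<Rightarrow> ('e1 + 'e2) + ('e1 \<times> 'e2)" where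
  "Y_edge1 G1 v1 f e = (if e \<in> inc G1 v1 then Inr (e, f e) else Inl (Inl e))"

definition Y_edge2 :: "('v1, 'e1) mgraph \<Rightarrow> ('v2, 'e2) mgraph \<Rightarrow> 'v1 \<Rightarrow> 'v2 \<Rightarrow> ('e1 \<Rightarrow> 'e2)
    \<Rightarrow> 'e2 \<Rightarrow> ('e1 + 'e2) + ('e1 \<times> 'e2)" where
  "Y_edge2 G1 G2 v1 v2 f e = (if e \<in> inc G2 v2 then Inr (inv_into (inc G1 v1) f e, e) else Inl (Inr e))"

locale Y_composition =
  fixes G1 :: "('v1, 'e1) mgraph" and G2 :: "('v2, 'e2) mgraph" and v1 v2 f
  assumes cubic1: "cubic G1" and cubic2: "cubic G2" and v1: "v1 \<in> verts G1" and v2: "v2 \<in> verts G2"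
    and bij_f: "bij_betw f (inc G1 v1) (inc G2 v2)"
begin

abbreviation "C \<equiv> Y_comp G1 G2 v1 v2 f"
abbreviation "\<psi>1 \<equiv> Y_edge1 G1 v1 f"
abbreviation "\<psi>2 \<equiv> Y_edge2 G1 G2 v1 v2 f"

lemma edges_C: "edges C = Inl ` Inl ` (edges G1 - inc G1 v1) \<union> Inl ` Inr ` (edges G2 - inc G2 v2)
    \<union> Inr ` {(e, f e) | e. e \<in> inc G1 v1}"
  and ends_C: "ends C (Inl (Inl e)) = Inl ` ends G1 e" "ends C (Inl (Inr e')) = Inr ` ends G2 e'"
    "ends C (Inr (e, e')) = {Inl (other_end G1 e v1), Inr (other_end G2 e' v2)}"
  unfolding Y_comp_def by simp_all

lemma f_in: "e \<in> inc G1 v1 \<Longrightarrow> f e \<in> inc G2 v2"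
  using bij_betwE[OF bij_f] by blast

lemma Y_edge2_f: "e \<in> inc G1 v1 \<Longrightarrow> \<psi>2 (f e) = \<psi>1 e"
  unfolding Y_edge1_def Y_edge2_def using f_in bij_betw_inv_into_left[OF bij_f] by simp

lemma Y_edge2_eq: "e \<in> inc G2 v2 \<Longrightarrow> \<psi>2 e = \<psi>1 (inv_into (inc G1 v1) f e)"
  using Y_edge2_f[of "inv_into (inc G1 v1) f e"] bij_betw_inv_into_right[OF bij_f]
    bij_betwE[OF bij_betw_inv_into[OF bij_f]] by simp

lemma edges_C_cases:
  assumes "z \<in> edges C"
  obtains (left) e where "e \<in> edges G1" "z = \<psi>1 e" | (right) e where "e \<in> edges G2 - inc G2 v2" "z = \<psi>2 e"
proof -
  consider e where "e \<in> edges G1 - inc G1 v1" "z = Inl (Inl e)"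
    | e where "e \<in> edges G2 - inc G2 v2" "z = Inl (Inr e)" | e where "e \<in> inc G1 v1" "z = Inr (e, f e)"
    using assms unfolding edges_C by blast
  then show thesis
  proof cases
    case (1 e) then show ?thesis using left[of e] by (simp add: Y_edge1_def)
  next
    case (2 e) then show ?thesis using right[of e] by (simp add: Y_edge2_def)
  next
    case (3 e) then show ?thesis using left[of e] by (simp add: Y_edge1_def inc_iff)
  qed
qed

lemma Y_edge1_edges: "e \<in> edges G1 \<Longrightarrow> \<psi>1 e \<in> edges C"
  unfolding Y_edge1_def edges_C by auto

lemma Y_edge2_edges: "e \<in> edges G2 \<Longrightarrow> \<psi>2 e \<in> edges C"
  using Y_edge2_eq[of e] Y_edge1_edges bij_betwE[OF bij_betw_inv_into[OF bij_f]]
  unfolding Y_edge2_def edges_C by (auto simp: inc_iff split: if_splits)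

lemma finite_edges_C: "finite (edges C)"
proof -
  have "{(e, f e) | e. e \<in> inc G1 v1} = (\<lambda>e. (e, f e)) ` inc G1 v1" by blast
  then show ?thesis unfolding edges_C
    using cubic_finite_edges[OF cubic1] cubic_finite_edges[OF cubic2] finite_inc[OF cubic1] by simp
qed

lemma mem_ends_Y_edge1:
  assumes "e \<in> edges G1" "u \<noteq> v1"
  shows "Inl u \<in> ends C (\<psi>1 e) \<longleftrightarrow> u \<in> ends G1 e"
  using assms ends_other_end[OF cubic_wf[OF cubic1], of e v1] unfolding Y_edge1_def by (auto simp: ends_C)

lemma mem_ends_Y_edge2:
  assumes "e \<in> edges G2" "u \<noteq> v2"
  shows "Inr u \<in> ends C (\<psi>2 e) \<longleftrightarrow> u \<in> ends G2 e"
proof (cases "e \<in> inc G2 v2")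
  case True
  then show ?thesis using assms ends_other_end[OF cubic_wf[OF cubic2] True]
    bij_betw_inv_into_right[OF bij_f True] unfolding Y_edge2_def by (auto simp: ends_C)
qed (use assms in \<open>auto simp: Y_edge2_def ends_C\<close>)

lemma Inl_mem_ends_C:
  assumes "z \<in> edges C" "Inl u \<in> ends C z"
  shows "u \<in> verts G1 - {v1} \<and> z \<in> \<psi>1 ` inc G1 u"
  using assms(1)
proof (cases rule: edges_C_cases)
  case (left e)
  have "u \<noteq> v1"
  proof
    assume "u = v1"
    then show False using left assms(2) ends_other_end[OF cubic_wf[OF cubic1], of e v1]
      unfolding Y_edge1_def by (auto simp: ends_C inc_iff split: if_splits)
  qed
  then show ?thesis using left assms(2) mem_ends_Y_edge1 cubic_ends_subset[OF cubic1] by (auto simp: inc_iff)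
next
  case (right e)
  then show ?thesis using assms(2) by (auto simp: Y_edge2_def ends_C)
qed

lemma Inr_mem_ends_C:
  assumes "z \<in> edges C" "Inr u \<in> ends C z"
  shows "u \<in> verts G2 - {v2} \<and> z \<in> \<psi>2 ` inc G2 u"
  using assms(1)
proof (cases rule: edges_C_cases)
  case (left e)
  show ?thesis
  proof (cases "e \<in> inc G1 v1")
    case True
    have "u = other_end G2 (f e) v2" using left assms(2) True by (simp add: Y_edge1_def ends_C)
    moreover have z: "z = \<psi>2 (f e)" "f e \<in> inc G2 v2" using left True Y_edge2_f f_in by auto
    ultimately show ?thesis using z ends_other_end[OF cubic_wf[OF cubic2] z(2)] cubic_ends_subset[OF cubic2]
      by (force simp: inc_iff)
  qed (use left assms(2) in \<open>auto simp: Y_edge1_def ends_C\<close>)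
next
  case (right e)
  then show ?thesis using assms(2) cubic_ends_subset[OF cubic2]
    by (auto simp: Y_edge2_def ends_C inc_iff)
qed

lemma inc_C_Inl:
  assumes "u \<in> verts G1" "u \<noteq> v1" shows "inc C (Inl u) = \<psi>1 ` inc G1 u"
  using Inl_mem_ends_C mem_ends_Y_edge1[OF _ assms(2)] Y_edge1_edges unfolding inc_def by auto

lemma inc_C_Inr:
  assumes "u \<in> verts G2" "u \<noteq> v2" shows "inc C (Inr u) = \<psi>2 ` inc G2 u"
  using Inr_mem_ends_C mem_ends_Y_edge2[OF _ assms(2)] Y_edge2_edges unfolding inc_def by auto


sublocale S1: Y_side G1 C v1 \<psi>1 Inl
proof
  show "inj_on \<psi>1 (edges G1)" unfolding inj_on_def Y_edge1_def by auto
  show "e \<in> edges G1 \<Longrightarrow> e \<notin> inc G1 v1 \<Longrightarrow> ends C (\<psi>1 e) = Inl ` ends G1 e" for e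
    by (simp add: Y_edge1_def ends_C)
qed (use cubic1 v1 Y_edge1_edges inc_C_Inl in auto)

sublocale S2: Y_side G2 C v2 \<psi>2 Inr
proof
  show "inj_on \<psi>2 (edges G2)" unfolding inj_on_def Y_edge2_def by auto
  show "e \<in> edges G2 \<Longrightarrow> e \<notin> inc G2 v2 \<Longrightarrow> ends C (\<psi>2 e) = Inr ` ends G2 e" for e
    by (simp add: Y_edge2_def ends_C)
qed (use cubic2 v2 Y_edge2_edges inc_C_Inr in auto)

lemma restrict_inj:
  assumes c: "c \<in> proper_3ec C" "c' \<in> proper_3ec C"
    and eq: "S1.restrict c = S1.restrict c'" "S2.restrict c = S2.restrict c'"
  shows "c = c'"
proof
  fix z show "c z = c' z"
  proof (cases "z \<in> edges C")
    case True
    then show ?thesis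
    proof (cases rule: edges_C_cases)
      case (left e)
      then show ?thesis using fun_cong[OF eq(1), of e] unfolding S1.restrict_def by simp
    next
      case (right e)
      then show ?thesis using fun_cong[OF eq(2), of e] unfolding S2.restrict_def by simp
    qed
  next
    case False
    then show ?thesis using proper_3ec_undefined c by metis
  qed
qed

lemma lift1:
  assumes c: "c \<in> proper_3ec C" and sw: "avoiding_switch G1 (inc G1 v1) (S1.restrict c) h"
  shows "\<exists>c'. (c, c') \<in> kempe_equiv C \<and> S1.restrict c' = h \<and> S2.restrict c' = S2.restrict c"
proof -
  obtain a b S where ab: "a \<in> {1,2,3}" "b \<in> {1,2,3}" "a \<noteq> b"
    and S: "kempe_closed G1 (S1.restrict c) a b S" "S \<inter> inc G1 v1 = {}"
    and h: "h = kempe_switch (S1.restrict c) a b S"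
    using sw unfolding avoiding_switch_def by blast
  have SE: "S \<subseteq> edges G1 - inc G1 v1" using S(2) kempe_closedD[OF S(1)] by blast
  then have image: "\<psi>1 ` S = Inl ` Inl ` S" by (force simp: Y_edge1_def)
  define c' where "c' = kempe_switch c a b (\<psi>1 ` S)"
  have "(c, c') \<in> kempe_equiv C" unfolding c'_def
    by (rule kempe_equiv_kempe_switch[OF finite_edges_C c S1.kempe_closed_image[OF c S] ab])
  moreover have "S1.restrict c' = h" unfolding c'_def h
    by (rule S1.restrict_kempe_switch_image) (use SE in blast)
  moreover have "S2.restrict c' = S2.restrict c" unfolding c'_def image
    by (rule S2.restrict_kempe_switch_disjoint) (auto simp: Y_edge2_def)
  ultimately show ?thesis by blast
qed

lemma lift2:
  assumes c: "c \<in> proper_3ec C" and sw: "avoiding_switch G2 (inc G2 v2) (S2.restrict c) h"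
  shows "\<exists>c'. (c, c') \<in> kempe_equiv C \<and> S2.restrict c' = h \<and> S1.restrict c' = S1.restrict c"
proof -
  obtain a b S where ab: "a \<in> {1,2,3}" "b \<in> {1,2,3}" "a \<noteq> b"
    and S: "kempe_closed G2 (S2.restrict c) a b S" "S \<inter> inc G2 v2 = {}"
    and h: "h = kempe_switch (S2.restrict c) a b S"
    using sw unfolding avoiding_switch_def by blast
  have SE: "S \<subseteq> edges G2 - inc G2 v2" using S(2) kempe_closedD[OF S(1)] by blast
  then have image: "\<psi>2 ` S = Inl ` Inr ` S" by (force simp: Y_edge2_def)
  define c' where "c' = kempe_switch c a b (\<psi>2 ` S)"
  have "(c, c') \<in> kempe_equiv C" unfolding c'_def
    by (rule kempe_equiv_kempe_switch[OF finite_edges_C c S2.kempe_closed_image[OF c S] ab])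
  moreover have "S2.restrict c' = h" unfolding c'_def h
    by (rule S2.restrict_kempe_switch_image) (use SE in blast)
  moreover have "S1.restrict c' = S1.restrict c" unfolding c'_def image
    by (rule S1.restrict_kempe_switch_disjoint) (auto simp: Y_edge1_def)
  ultimately show ?thesis by blast
qed

lemma restrict_Y_edge2_f:
  "e \<in> inc G1 v1 \<Longrightarrow> S2.restrict c (f e) = S1.restrict c e"
  using Y_edge2_f f_in unfolding S1.restrict_def S2.restrict_def by (simp add: inc_iff)

text \<open>All three colours occur at the cut, so a permutation relating two colourings that agree
on G2 fixes every colour.\<close>
lemma agree_permuted:
  assumes c: "c \<in> proper_3ec C" "c' \<in> proper_3ec C" and \<pi>: "\<pi> permutes {1,2,3}"
    and eq2: "S2.restrict c = S2.restrict c'" and eq1: "S1.restrict c = permute_colours G1 \<pi> (S1.restrict c')"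
  shows "(avoiding_switch G1 (inc G1 v1))\<^sup>*\<^sup>* (S1.restrict c) (S1.restrict c')"
proof -
  have "\<pi> (S1.restrict c' e) = S1.restrict c' e" if e: "e \<in> inc G1 v1" for e
  proof -
    have "\<pi> (S1.restrict c' e) = S1.restrict c e"
      using fun_cong[OF eq1, of e] e unfolding permute_colours_def by (simp add: inc_iff)
    also have "\<dots> = S1.restrict c' e" using restrict_Y_edge2_f[OF e] eq2 by metis
    finally show ?thesis .
  qed
  moreover have "S1.restrict c' ` inc G1 v1 = {1,2,3}"
    using proper_3ec_bij_betw_inc[OF S1.restrict_proper[OF c(2)] cubic_card_inc[OF cubic1 v1]]
    unfolding bij_betw_def by blast
  ultimately have "\<pi> z = z" if "z \<in> {1,2,3}" for z using that by (metis imageE)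
  then have "\<pi> z = z" for z using permutes_not_in[OF \<pi>, of z] by (cases "z \<in> {1,2,3}") auto
  then have "\<pi> = id" by (simp add: fun_eq_iff)
  then show ?thesis using eq1 permute_colours_id[OF S1.restrict_proper[OF c(2)]] by simp
qed

definition glue :: "('e1 \<Rightarrow> nat) \<Rightarrow> ('e2 \<Rightarrow> nat) \<Rightarrow> ('e1 + 'e2) + ('e1 \<times> 'e2) \<Rightarrow> nat" where
  "glue c1 c2 z = (if z \<in> edges C then
     (case z of Inl (Inl e) \<Rightarrow> c1 e | Inl (Inr e) \<Rightarrow> c2 e | Inr (e, _) \<Rightarrow> c1 e) else undefined)"

definition agree_at_cut :: "('e1 \<Rightarrow> nat) \<Rightarrow> ('e2 \<Rightarrow> nat) \<Rightarrow> bool" where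
  "agree_at_cut c1 c2 \<longleftrightarrow> (\<forall>e \<in> inc G1 v1. c2 (f e) = c1 e)"

lemma glue_Y_edge1: "e \<in> edges G1 \<Longrightarrow> glue c1 c2 (\<psi>1 e) = c1 e"
  using Y_edge1_edges unfolding glue_def by (simp add: Y_edge1_def)

lemma glue_Y_edge2:
  assumes agree: "agree_at_cut c1 c2" and e: "e \<in> edges G2"
  shows "glue c1 c2 (\<psi>2 e) = c2 e"
proof (cases "e \<in> inc G2 v2")
  case True
  define e1 where "e1 = inv_into (inc G1 v1) f e"
  have e1: "e1 \<in> inc G1 v1" "f e1 = e"
    using bij_betwE[OF bij_betw_inv_into[OF bij_f]] bij_betw_inv_into_right[OF bij_f] True
    unfolding e1_def by auto
  then have "c1 e1 = c2 e" using agree unfolding agree_at_cut_def by metis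
  then show ?thesis using True Y_edge2_edges[OF e] unfolding glue_def Y_edge2_def e1_def[symmetric] by simp
qed (use Y_edge2_edges[OF e] in \<open>simp add: glue_def Y_edge2_def\<close>)

lemma glue_proper:
  assumes c1: "c1 \<in> proper_3ec G1" and c2: "c2 \<in> proper_3ec G2"
    and agree: "agree_at_cut c1 c2"
  shows "glue c1 c2 \<in> proper_3ec C"
proof (rule proper_3ecI_inj_on_inc)
  have eq1: "\<And>e. e \<in> edges G1 \<Longrightarrow> glue c1 c2 (\<psi>1 e) = c1 e" by (rule glue_Y_edge1)
  have eq2: "\<And>e. e \<in> edges G2 \<Longrightarrow> glue c1 c2 (\<psi>2 e) = c2 e" by (rule glue_Y_edge2[OF agree])
  show "glue c1 c2 z \<in> {1,2,3}" if "z \<in> edges C" for z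
    using that
  proof (cases rule: edges_C_cases)
    case (left e)
    then show ?thesis using eq1 proper_3ec_colour[OF c1] by simp
  next
    case (right e)
    then show ?thesis using eq2 proper_3ec_colour[OF c2] by simp
  qed
  show "inj_on (glue c1 c2) (inc C w)" for w
  proof (cases w)
    case (Inl u)
    show ?thesis
    proof (cases "u \<in> verts G1 - {v1}")
      case True
      then show ?thesis using S1.inj_on_inc_emb[OF c1 eq1] Inl by blast
    next
      case False
      then have "inc C w = {}" using Inl_mem_ends_C Inl unfolding inc_def by blast
      then show ?thesis by simp
    qed
  next
    case (Inr u)
    show ?thesis
    proof (cases "u \<in> verts G2 - {v2}")
      case True
      then show ?thesis using S2.inj_on_inc_emb[OF c2 eq2] Inr by blast
    next
      case False
      then have "inc C w = {}" using Inr_mem_ends_C Inr unfolding inc_def by blast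
      then show ?thesis by simp
    qed
  qed
qed (simp add: glue_def)

lemma restrict_onto:
  assumes c1: "c1 \<in> proper_3ec G1" and c2: "c2 \<in> proper_3ec G2"
  shows "\<exists>c \<in> proper_3ec C. (S1.restrict c, c1) \<in> kempe_equiv G1 \<and> (S2.restrict c, c2) \<in> kempe_equiv G2"
proof -
  have "bij_betw (c2 \<circ> f) (inc G1 v1) {1,2,3}"
    using bij_betw_trans[OF bij_f proper_3ec_bij_betw_inc[OF c2 cubic_card_inc[OF cubic2 v2]]] .
  then obtain \<pi> where \<pi>: "\<pi> permutes {1,2,3}" and match: "\<And>e. e \<in> inc G1 v1 \<Longrightarrow> \<pi> (c2 (f e)) = c1 e"
    using permutation_matching_colours[OF proper_3ec_bij_betw_inc[OF c1 cubic_card_inc[OF cubic1 v1]]]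
    by fastforce
  define c2' where "c2' = permute_colours G2 \<pi> c2"
  have equiv: "(c2, c2') \<in> kempe_equiv G2" unfolding c2'_def
    by (rule kempe_equiv_permute_colours[OF cubic_finite_edges[OF cubic2] c2 \<pi>])
  have c2': "c2' \<in> proper_3ec G2" using kempe_equiv_proper[OF equiv] by blast
  have agree: "agree_at_cut c1 c2'"
    using match f_in unfolding agree_at_cut_def c2'_def permute_colours_def by (simp add: inc_iff)
  have r1: "S1.restrict (glue c1 c2') = c1" by (rule S1.restrict_eqI[OF c1 glue_Y_edge1])
  have r2: "S2.restrict (glue c1 c2') = c2'" by (rule S2.restrict_eqI[OF c2' glue_Y_edge2[OF agree]])
  show ?thesis
  proof (intro bexI conjI)
    show "glue c1 c2' \<in> proper_3ec C" by (rule glue_proper[OF c1 c2' agree])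
    show "(S1.restrict (glue c1 c2'), c1) \<in> kempe_equiv G1" unfolding r1 by (rule kempe_equiv_refl[OF c1])
    show "(S2.restrict (glue c1 c2'), c2) \<in> kempe_equiv G2" unfolding r2 by (rule kempe_equiv_sym[OF equiv])
  qed
qed

sublocale Y: kempe_product C G1 G2 S1.restrict S2.restrict "inc G1 v1" "inc G2 v2"
proof
  show "finite (edges C)" "finite (edges G1)" "finite (edges G2)"
    using finite_edges_C cubic_finite_edges cubic1 cubic2 by auto
  show "\<And>e e'. e \<in> inc G1 v1 \<Longrightarrow> e' \<in> inc G1 v1 \<Longrightarrow> ends G1 e \<inter> ends G1 e' \<noteq> {}"
    "\<And>e e'. e \<in> inc G2 v2 \<Longrightarrow> e' \<in> inc G2 v2 \<Longrightarrow> ends G2 e \<inter> ends G2 e' \<noteq> {}"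
    unfolding inc_def by blast+
  show "\<And>c. c \<in> proper_3ec C \<Longrightarrow> S1.restrict c \<in> proper_3ec G1 \<and> S2.restrict c \<in> proper_3ec G2"
    using S1.restrict_proper S2.restrict_proper by blast
  show "\<And>c c'. kempe_step C c c' \<Longrightarrow>
      (S1.restrict c, S1.restrict c') \<in> kempe_equiv G1 \<and> (S2.restrict c, S2.restrict c') \<in> kempe_equiv G2"
    using S1.restrict_kempe_step S2.restrict_kempe_step by blast
  show "\<And>\<pi> c. \<pi> permutes {1,2,3} \<Longrightarrow> c \<in> proper_3ec C \<Longrightarrow>
      S1.restrict (permute_colours C \<pi> c) = permute_colours G1 \<pi> (S1.restrict c) \<and>
      S2.restrict (permute_colours C \<pi> c) = permute_colours G2 \<pi> (S2.restrict c)"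
    using S1.restrict_permute_colours S2.restrict_permute_colours by blast
qed (rule restrict_inj lift1 lift2 agree_permuted restrict_onto; assumption)+

lemma K3_Y_comp: "K3 (Y_comp G1 G2 v1 v2 f) = K3 G1 * K3 G2"
  by (rule Y.K3_eq_mult)

end

subsection \<open>H-compositions\<close>

definition H_cut2 :: "('v1, 'e1) mgraph \<Rightarrow> 'e1 \<Rightarrow> ('v1 \<Rightarrow> 'v2) \<Rightarrow> 'v2 \<Rightarrow> ('e1 + 'e2) + ('v1 \<times> 'v2)" where
  "H_cut2 G1 d1 g w = Inr (inv_into (ends G1 d1) g w, w)"

locale H_composition =
  fixes G1 :: "('v1, 'e1) mgraph" and G2 :: "('v2, 'e2) mgraph" and d1 d2 g x1 y1
  assumes cubic1: "cubic G1" and cubic2: "cubic G2" and d1: "d1 \<in> edges G1" and d2: "d2 \<in> edges G2"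
    and bij_g: "bij_betw g (ends G1 d1) (ends G2 d2)" and ends_d1: "ends G1 d1 = {x1, y1}" and x1_neq_y1: "x1 \<noteq> y1"
begin

abbreviation "C \<equiv> H_comp G1 G2 d1 d2 g"
abbreviation "\<kappa>2 \<equiv> H_cut2 G1 d1 g :: 'v2 \<Rightarrow> ('e1 + 'e2) + ('v1 \<times> 'v2)"

lemma edges_C: "edges C = Inl ` Inl ` (edges G1 - {d1}) \<union> Inl ` Inr ` (edges G2 - {d2})
    \<union> Inr ` {(x, g x) | x. x \<in> ends G1 d1}"
  and ends_C: "ends C (Inl (Inl e)) = Inl ` ends G1 e" "ends C (Inl (Inr e')) = Inr ` ends G2 e'"
    "ends C (Inr (u, w)) = {Inl u, Inr w}"
  unfolding H_comp_def by simp_all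

lemma ends_d2: "ends G2 d2 = {g x1, g y1}" "g x1 \<noteq> g y1"
  using bij_g ends_d1 x1_neq_y1 unfolding bij_betw_def inj_on_def by auto

lemma H_cut2_g: "u \<in> ends G1 d1 \<Longrightarrow> \<kappa>2 (g u) = Inr (u, g u)"
  unfolding H_cut2_def using bij_betw_inv_into_left[OF bij_g] by simp

lemma finite_edges_C: "finite (edges C)"
proof -
  have "{(x, g x) | x. x \<in> ends G1 d1} = (\<lambda>x. (x, g x)) ` {x1, y1}" using ends_d1 by blast
  then show ?thesis unfolding edges_C
    using cubic_finite_edges[OF cubic1] cubic_finite_edges[OF cubic2] by simp
qed

lemma inc_C_Inl:
  "inc C (Inl u) = (\<lambda>e. Inl (Inl e)) ` (inc G1 u - {d1}) \<union> (if u \<in> ends G1 d1 then {Inr (u, g u)} else {})"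
  unfolding inc_def edges_C by (auto simp: ends_C)

lemma inc_C_Inr:
  "inc C (Inr w) = (\<lambda>e. Inl (Inr e)) ` (inc G2 w - {d2}) \<union> (if w \<in> ends G2 d2 then {\<kappa>2 w} else {})"
proof -
  have Inr_iff: "Inr (u, w') \<in> inc C (Inr w) \<longleftrightarrow> w \<in> ends G2 d2 \<and> Inr (u, w') = \<kappa>2 w" for u w'
  proof
    assume "Inr (u, w') \<in> inc C (Inr w)"
    then have "u \<in> ends G1 d1" "w' = g u" "w' = w" unfolding inc_def edges_C by (auto simp: ends_C)
    then show "w \<in> ends G2 d2 \<and> Inr (u, w') = \<kappa>2 w" using bij_betwE[OF bij_g] H_cut2_g by auto
  next
    assume "w \<in> ends G2 d2 \<and> Inr (u, w') = \<kappa>2 w"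
    then have "u \<in> ends G1 d1" "w = g u" "w' = w"
      using bij_betwE[OF bij_betw_inv_into[OF bij_g]] bij_betw_inv_into_right[OF bij_g]
      unfolding H_cut2_def by auto
    then show "Inr (u, w') \<in> inc C (Inr w)" unfolding inc_def edges_C by (auto simp: ends_C)
  qed
  show ?thesis
  proof (rule set_eqI)
    fix z
    show "z \<in> inc C (Inr w) \<longleftrightarrow>
        z \<in> (\<lambda>e. Inl (Inr e)) ` (inc G2 w - {d2}) \<union> (if w \<in> ends G2 d2 then {\<kappa>2 w} else {})"
    proof (cases z)
      case (Inl z1)
      then show ?thesis by (cases z1) (auto simp: inc_def edges_C ends_C H_cut2_def)
    next
      case (Inr p)
      then obtain u w' where "z = Inr (u, w')" by (cases p) auto
      then show ?thesis using Inr_iff[of u w'] by auto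
    qed
  qed
qed


sublocale S1: H_side G1 C d1 x1 y1 "\<lambda>e. Inl (Inl e)" "\<lambda>u. Inr (u, g u)" Inl
proof
  show "ends C (Inl (Inl e)) = Inl ` ends G1 e" for e by (rule ends_C(1))
qed (use cubic1 d1 ends_d1 x1_neq_y1 inc_C_Inl in \<open>auto simp: inj_on_def edges_C\<close>)

sublocale S2: H_side G2 C d2 "g x1" "g y1" "\<lambda>e. Inl (Inr e)" \<kappa>2 Inr
proof
  show "\<kappa>2 w \<in> edges C" if "w \<in> ends G2 d2" for w
  proof -
    have "inv_into (ends G1 d1) g w \<in> ends G1 d1" "g (inv_into (ends G1 d1) g w) = w"
      using that bij_betwE[OF bij_betw_inv_into[OF bij_g]] bij_betw_inv_into_right[OF bij_g] by auto
    then have "(inv_into (ends G1 d1) g w, w) \<in> {(x, g x) | x. x \<in> ends G1 d1}" by force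
    then show ?thesis unfolding H_cut2_def edges_C by blast
  qed
  show "ends C (Inl (Inr e)) = Inr ` ends G2 e" for e by (rule ends_C(2))
qed (use cubic2 d2 ends_d2 inc_C_Inr in \<open>auto simp: inj_on_def edges_C H_cut2_def\<close>)

lemma edges_C_cases:
  assumes "z \<in> edges C"
  obtains (left) e where "e \<in> edges G1 - {d1}" "z = Inl (Inl e)"
    | (right) e where "e \<in> edges G2 - {d2}" "z = Inl (Inr e)"
    | (cut) u where "u \<in> ends G1 d1" "z = Inr (u, g u)"
  using assms unfolding edges_C by blast

lemma Inl_mem_ends_C:
  assumes "z \<in> edges C" "Inl u \<in> ends C z" shows "u \<in> verts G1"
  using assms(1)
proof (cases rule: edges_C_cases)
  case (left e)
  then show ?thesis using assms(2) cubic_ends_subset[OF cubic1] by (auto simp: ends_C)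
next
  case (right e)
  then show ?thesis using assms(2) by (auto simp: ends_C)
next
  case (cut x)
  then show ?thesis using assms(2) cubic_ends_subset[OF cubic1 d1] by (auto simp: ends_C)
qed

lemma Inr_mem_ends_C:
  assumes "z \<in> edges C" "Inr u \<in> ends C z" shows "u \<in> verts G2"
  using assms(1)
proof (cases rule: edges_C_cases)
  case (left e)
  then show ?thesis using assms(2) by (auto simp: ends_C)
next
  case (right e)
  then show ?thesis using assms(2) cubic_ends_subset[OF cubic2] by (auto simp: ends_C)
next
  case (cut x)
  then show ?thesis using assms(2) cubic_ends_subset[OF cubic2 d2] bij_betwE[OF bij_g]
    by (auto simp: ends_C)
qed

lemma restrict_d1_d2: "S1.restrict c d1 = S2.restrict c d2"
  unfolding S1.restrict_def S2.restrict_def using H_cut2_g ends_d1 by simp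

lemma restrict_inj:
  assumes c: "c \<in> proper_3ec C" "c' \<in> proper_3ec C"
    and eq: "S1.restrict c = S1.restrict c'" "S2.restrict c = S2.restrict c'"
  shows "c = c'"
proof
  fix z show "c z = c' z"
  proof (cases "z \<in> edges C")
    case True
    then consider e where "e \<in> edges G1 - {d1}" "z = Inl (Inl e)" | e where "e \<in> edges G2 - {d2}" "z = Inl (Inr e)"
      | u where "u \<in> ends G1 d1" "z = Inr (u, g u)" unfolding edges_C by blast
    then show ?thesis
    proof cases
      case (1 e)
      then show ?thesis using fun_cong[OF eq(1), of e] unfolding S1.restrict_def by auto
    next
      case (2 e)
      then show ?thesis using fun_cong[OF eq(2), of e] unfolding S2.restrict_def by auto
    next
      case (3 u)
      then show ?thesis using S1.restrict_d[OF c(1) 3(1)] S1.restrict_d[OF c(2) 3(1)] eq(1) by simp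
    qed
  next
    case False
    then show ?thesis using proper_3ec_undefined c by metis
  qed
qed

lemma lift1:
  assumes c: "c \<in> proper_3ec C" and sw: "avoiding_switch G1 {d1} (S1.restrict c) h"
  shows "\<exists>c'. (c, c') \<in> kempe_equiv C \<and> S1.restrict c' = h \<and> S2.restrict c' = S2.restrict c"
proof -
  obtain a b S where ab: "a \<in> {1,2,3}" "b \<in> {1,2,3}" "a \<noteq> b"
    and S: "kempe_closed G1 (S1.restrict c) a b S" "d1 \<notin> S"
    and h: "h = kempe_switch (S1.restrict c) a b S"
    using sw unfolding avoiding_switch_def by blast
  define c' where "c' = kempe_switch c a b ((\<lambda>e. Inl (Inl e)) ` S)"
  have "(c, c') \<in> kempe_equiv C" unfolding c'_def
    by (rule kempe_equiv_kempe_switch[OF finite_edges_C c S1.kempe_closed_image[OF c S] ab])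
  moreover have "S1.restrict c' = h" unfolding c'_def h
    by (rule S1.restrict_kempe_switch_image) (use S kempe_closedD[OF S(1)] in blast)
  moreover have "S2.restrict c' = S2.restrict c" unfolding c'_def
    by (rule S2.restrict_kempe_switch_disjoint) (auto simp: H_cut2_def)
  ultimately show ?thesis by blast
qed

lemma lift2:
  assumes c: "c \<in> proper_3ec C" and sw: "avoiding_switch G2 {d2} (S2.restrict c) h"
  shows "\<exists>c'. (c, c') \<in> kempe_equiv C \<and> S2.restrict c' = h \<and> S1.restrict c' = S1.restrict c"
proof -
  obtain a b S where ab: "a \<in> {1,2,3}" "b \<in> {1,2,3}" "a \<noteq> b"
    and S: "kempe_closed G2 (S2.restrict c) a b S" "d2 \<notin> S"
    and h: "h = kempe_switch (S2.restrict c) a b S"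
    using sw unfolding avoiding_switch_def by blast
  define c' where "c' = kempe_switch c a b ((\<lambda>e. Inl (Inr e)) ` S)"
  have "(c, c') \<in> kempe_equiv C" unfolding c'_def
    by (rule kempe_equiv_kempe_switch[OF finite_edges_C c S2.kempe_closed_image[OF c S] ab])
  moreover have "S2.restrict c' = h" unfolding c'_def h
    by (rule S2.restrict_kempe_switch_image) (use S kempe_closedD[OF S(1)] in blast)
  moreover have "S1.restrict c' = S1.restrict c" unfolding c'_def
    by (rule S1.restrict_kempe_switch_disjoint) auto
  ultimately show ?thesis by blast
qed

text \<open>A permutation relating two colourings that agree on G2 fixes the colour of the cut
edge; if it is not the identity it exchanges the two other colours, which is a switch of a
closed set avoiding d1.\<close>
lemma agree_permuted:
  assumes c: "c \<in> proper_3ec C" "c' \<in> proper_3ec C" and \<pi>: "\<pi> permutes {1,2,3}"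
    and eq2: "S2.restrict c = S2.restrict c'" and eq1: "S1.restrict c = permute_colours G1 \<pi> (S1.restrict c')"
  shows "(avoiding_switch G1 {d1})\<^sup>*\<^sup>* (S1.restrict c) (S1.restrict c')"
proof (cases "\<pi> = id")
  case True
  then show ?thesis using eq1 permute_colours_id[OF S1.restrict_proper[OF c(2)]] by simp
next
  case False
  define h where "h = S1.restrict c'"
  have h: "h \<in> proper_3ec G1" unfolding h_def by (rule S1.restrict_proper[OF c(2)])
  have "\<pi> (h d1) = S1.restrict c d1" using fun_cong[OF eq1, of d1] d1 unfolding h_def permute_colours_def by simp
  also have "\<dots> = h d1" unfolding h_def using restrict_d1_d2[of c] restrict_d1_d2[of c'] eq2 by simp
  finally obtain \<beta> \<gamma> where \<beta>\<gamma>: "\<beta> \<in> {1,2,3}" "\<gamma> \<in> {1,2,3}" "\<beta> \<noteq> \<gamma>" "h d1 \<notin> {\<beta>, \<gamma>}"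
    and \<pi>_eq: "\<pi> = transpose \<beta> \<gamma>"
    using permutes_fixing_colour[OF \<pi> proper_3ec_colour[OF h d1]] False by blast
  define T where "T = {e \<in> edges G1. h e \<in> {\<beta>, \<gamma>}}"
  have r1: "S1.restrict c = kempe_switch h \<beta> \<gamma> T"
    using eq1 permute_colours_transpose[OF h] unfolding \<pi>_eq T_def h_def by simp
  have "kempe_closed G1 (S1.restrict c) \<beta> \<gamma> T"
    unfolding r1 kempe_closed_kempe_switch T_def by (rule kempe_closed_class)
  moreover have "kempe_switch (S1.restrict c) \<beta> \<gamma> T = h"
    unfolding r1 T_def by (rule kempe_switch_kempe_switch)
  moreover have "T \<inter> {d1} = {}" using \<beta>\<gamma>(4) unfolding T_def by auto
  ultimately have "avoiding_switch G1 {d1} (S1.restrict c) h"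
    unfolding avoiding_switch_def using S1.restrict_proper[OF c(1)] \<beta>\<gamma>(1-3) by blast
  then show ?thesis unfolding h_def by (rule r_into_rtranclp[where r="avoiding_switch G1 {d1}"])
qed

definition glue :: "('e1 \<Rightarrow> nat) \<Rightarrow> ('e2 \<Rightarrow> nat) \<Rightarrow> ('e1 + 'e2) + ('v1 \<times> 'v2) \<Rightarrow> nat" where
  "glue c1 c2 z = (if z \<in> edges C then
     (case z of Inl (Inl e) \<Rightarrow> c1 e | Inl (Inr e) \<Rightarrow> c2 e | Inr _ \<Rightarrow> c1 d1) else undefined)"

lemma glue_lift_edge1:
  assumes "u \<in> verts G1" "e \<in> inc G1 u"
  shows "glue c1 c2 (S1.lift_edge u e) = c1 e"
proof -
  have "S1.lift_edge u e \<in> edges C" using S1.inc_emb_lift_edge[OF assms(1)] assms(2) unfolding inc_def by blast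
  then show ?thesis unfolding glue_def S1.lift_edge_def by simp
qed

lemma glue_lift_edge2:
  fixes c1 :: "'e1 \<Rightarrow> nat" and c2 :: "'e2 \<Rightarrow> nat"
  assumes "c2 d2 = c1 d1" "u \<in> verts G2" "e \<in> inc G2 u"
  shows "glue c1 c2 (S2.lift_edge u e) = c2 e"
proof -
  have "S2.lift_edge u e \<in> edges C" using S2.inc_emb_lift_edge[OF assms(2)] assms(3) unfolding inc_def by blast
  then show ?thesis using assms(1) unfolding glue_def S2.lift_edge_def H_cut2_def by simp
qed


lemma glue_proper:
  assumes c1: "c1 \<in> proper_3ec G1" and c2: "c2 \<in> proper_3ec G2" and agree: "c2 d2 = c1 d1"
  shows "glue c1 c2 \<in> proper_3ec C"
proof (rule proper_3ecI_inj_on_inc)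
  show "glue c1 c2 z \<in> {1,2,3}" if z: "z \<in> edges C" for z
    using z
    by (cases rule: edges_C_cases) (use z proper_3ec_colour[OF c1] proper_3ec_colour[OF c2] d1 in \<open>auto simp: glue_def\<close>)
  have eq1: "\<And>e. e \<in> inc G1 u \<Longrightarrow> glue c1 c2 (S1.lift_edge u e) = c1 e" if "u \<in> verts G1" for u
    using glue_lift_edge1[OF that] .
  have eq2: "\<And>e. e \<in> inc G2 u \<Longrightarrow> glue c1 c2 (S2.lift_edge u e) = c2 e" if "u \<in> verts G2" for u
    using glue_lift_edge2[of c2 c1, OF agree that] .
  show "inj_on (glue c1 c2) (inc C w)" for w
  proof (cases w)
    case (Inl u)
    show ?thesis
    proof (cases "u \<in> verts G1")
      case True
      then show ?thesis using S1.inj_on_inc_emb[OF c1 eq1[OF True] True] Inl by simp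
    next
      case False
      then have "inc C w = {}" using Inl_mem_ends_C Inl unfolding inc_def by blast
      then show ?thesis by simp
    qed
  next
    case (Inr u)
    show ?thesis
    proof (cases "u \<in> verts G2")
      case True
      then show ?thesis using S2.inj_on_inc_emb[OF c2 eq2[OF True] True] Inr by simp
    next
      case False
      then have "inc C w = {}" using Inr_mem_ends_C Inr unfolding inc_def by blast
      then show ?thesis by simp
    qed
  qed
qed (simp add: glue_def)

lemma restrict_onto:
  assumes c1: "c1 \<in> proper_3ec G1" and c2: "c2 \<in> proper_3ec G2"
  shows "\<exists>c \<in> proper_3ec C. (S1.restrict c, c1) \<in> kempe_equiv G1 \<and> (S2.restrict c, c2) \<in> kempe_equiv G2"
proof -
  define \<pi> where "\<pi> = transpose (c2 d2) (c1 d1)"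
  have \<pi>: "\<pi> permutes {1,2,3}"
    unfolding \<pi>_def by (rule permutes_swap_id[OF proper_3ec_colour[OF c2 d2] proper_3ec_colour[OF c1 d1]])
  define c2' where "c2' = permute_colours G2 \<pi> c2"
  have equiv: "(c2, c2') \<in> kempe_equiv G2" unfolding c2'_def
    by (rule kempe_equiv_permute_colours[OF cubic_finite_edges[OF cubic2] c2 \<pi>])
  have c2': "c2' \<in> proper_3ec G2" using kempe_equiv_proper[OF equiv] by blast
  have agree: "c2' d2 = c1 d1" unfolding c2'_def \<pi>_def permute_colours_def using d2 by simp
  have cut: "Inr (x1, g x1) \<in> edges C" unfolding edges_C using ends_d1 by blast
  have r1: "S1.restrict (glue c1 c2') = c1"
  proof (rule S1.restrict_eqI[OF c1])
    show "glue c1 c2' (Inr (x1, g x1)) = c1 d1" using cut by (simp add: glue_def)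
    show "glue c1 c2' (Inl (Inl e)) = c1 e" if "e \<in> edges G1 - {d1}" for e
      using that by (simp add: glue_def edges_C)
  qed
  have r2: "S2.restrict (glue c1 c2') = c2'"
  proof (rule S2.restrict_eqI[OF c2'])
    show "glue c1 c2' (\<kappa>2 (g x1)) = c2' d2"
      using cut agree H_cut2_g[of x1] ends_d1 by (simp add: glue_def)
    show "glue c1 c2' (Inl (Inr e)) = c2' e" if "e \<in> edges G2 - {d2}" for e
      using that by (simp add: glue_def edges_C)
  qed
  show ?thesis
  proof (intro bexI conjI)
    show "glue c1 c2' \<in> proper_3ec C" by (rule glue_proper[OF c1 c2' agree])
    show "(S1.restrict (glue c1 c2'), c1) \<in> kempe_equiv G1" unfolding r1 by (rule kempe_equiv_refl[OF c1])
    show "(S2.restrict (glue c1 c2'), c2) \<in> kempe_equiv G2" unfolding r2 by (rule kempe_equiv_sym[OF equiv])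
  qed
qed

sublocale H: kempe_product C G1 G2 S1.restrict S2.restrict "{d1}" "{d2}"
proof
  show "finite (edges C)" "finite (edges G1)" "finite (edges G2)"
    using finite_edges_C cubic_finite_edges cubic1 cubic2 by auto
  show "\<And>e e'. e \<in> {d1} \<Longrightarrow> e' \<in> {d1} \<Longrightarrow> ends G1 e \<inter> ends G1 e' \<noteq> {}"
    "\<And>e e'. e \<in> {d2} \<Longrightarrow> e' \<in> {d2} \<Longrightarrow> ends G2 e \<inter> ends G2 e' \<noteq> {}"
    using ends_d1 ends_d2 by auto
  show "\<And>c. c \<in> proper_3ec C \<Longrightarrow> S1.restrict c \<in> proper_3ec G1 \<and> S2.restrict c \<in> proper_3ec G2"
    using S1.restrict_proper S2.restrict_proper by blast
  show "\<And>c c'. kempe_step C c c' \<Longrightarrow>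
      (S1.restrict c, S1.restrict c') \<in> kempe_equiv G1 \<and> (S2.restrict c, S2.restrict c') \<in> kempe_equiv G2"
    using S1.restrict_kempe_step S2.restrict_kempe_step by blast
  show "\<And>\<pi> c. \<pi> permutes {1,2,3} \<Longrightarrow> c \<in> proper_3ec C \<Longrightarrow>
      S1.restrict (permute_colours C \<pi> c) = permute_colours G1 \<pi> (S1.restrict c) \<and>
      S2.restrict (permute_colours C \<pi> c) = permute_colours G2 \<pi> (S2.restrict c)"
    using S1.restrict_permute_colours S2.restrict_permute_colours by blast
qed (rule restrict_inj lift1 lift2 agree_permuted restrict_onto; assumption)+

lemma K3_H_comp: "K3 (H_comp G1 G2 d1 d2 g) = K3 G1 * K3 G2"
  by (rule H.K3_eq_mult)

end

theorem theorem12: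
  fixes G1 :: "('v1, 'e1) mgraph" and G2 :: "('v2, 'e2) mgraph"
  assumes "cubic G1" and "cubic G2"
    and "K3 G1 = a" and "K3 G2 = b"
  shows "(\<forall>v1 v2 f. v1 \<in> verts G1 \<and> v2 \<in> verts G2 \<and> bij_betw f (inc G1 v1) (inc G2 v2)
            \<longrightarrow> K3 (Y_comp G1 G2 v1 v2 f) = a * b)
       \<and> (\<forall>d1 d2 g. d1 \<in> edges G1 \<and> d2 \<in> edges G2 \<and> bij_betw g (ends G1 d1) (ends G2 d2)
            \<longrightarrow> K3 (H_comp G1 G2 d1 d2 g) = a * b)"
proof (intro conjI allI impI)
  fix v1 v2 f assume "v1 \<in> verts G1 \<and> v2 \<in> verts G2 \<and> bij_betw f (inc G1 v1) (inc G2 v2)"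
  then interpret Y_composition G1 G2 v1 v2 f using assms(1,2) by unfold_locales auto
  show "K3 (Y_comp G1 G2 v1 v2 f) = a * b" using K3_Y_comp assms(3,4) by simp
next
  fix d1 d2 g assume H: "d1 \<in> edges G1 \<and> d2 \<in> edges G2 \<and> bij_betw g (ends G1 d1) (ends G2 d2)"
  then obtain x1 y1 where "ends G1 d1 = {x1, y1}" "x1 \<noteq> y1"
    using cubic_card_ends[OF assms(1)] card_2_iff by metis
  then interpret H_composition G1 G2 d1 d2 g x1 y1 using assms(1,2) H by unfold_locales auto
  show "K3 (H_comp G1 G2 d1 d2 g) = a * b" using K3_H_comp assms(3,4) by simp
qed

end
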